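(* Let $G$ be an instance of the rank-maximal matchings problem (with last-resort posts added), let $M$ be a rank-maximal matching in $G$, and let $G_M$ be its switching graph. Then: (1) If $p$ is a post unmatched in $M$, then $p\in\mathcal{E}_1\cap\dots\cap\mathcal{E}_{r+1}$, and therefore $p$ is a sink in $G_M$. (2) A post $p$ belongs to a sink component of $G_M$ if and only if $p\in\mathcal{E}_{r+1}$; a post $p$ belongs to a non-sink component if and only if $p\in\mathcal{U}_{r+1}$. (3) Let $T$ be a directed path in $G_M$ from a post $p$ to some sink $q$. Then $w(T)=0$ if and only if $p\in\mathcal{E}_1\cap\dots\cap\mathcal{E}_{r+1}$.
   Context: An instance is a bipartite graph $G=(\mathcal{A}\cup\mathcal{P},E)$, $\mathcal{A}$ applicants, $\mathcal{P}$ posts, $E=E_1\cup\dots\cup E_r$ disjoint; $(a,p)\in E_i$ means $p$ is an $i$-th choice of $a$, $\mathrm{rank}(a,p)=i$ (ties allowed). Each applicant $a$ gets its own dummy last-resort post $\ell(a)$ with $(a,\ell(a))\in E_{r+1}$; the resulting instance is still called $G$. The signature of a matching is $(x_1,\dots,x_{r+1})$, $x_i$ the number of applicants matched along rank-$i$ edges; a matching is rank-maximal if its signature is lexicographically maximum. Even/odd/unreachable: for a bipartite graph and maximum matching $N$, a vertex is even (odd) if an even (odd) length $N$-alternating path leads to it from an $N$-unmatched vertex, unreachable otherwise; independent of $N$. Irving et al.'s algorithm: $G'_1=(\mathcal{A}\cup\mathcal{P},E_1)$, $M_1$ a maximum matching. For $i=1,\dots,r$: let $\mathcal{E}_i,\mathcal{O}_i,\mathcal{U}_i$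 be the even/odd/unreachable vertices of $G'_i$; delete all edges of rank $>i$ incident to $\mathcal{O}_i\cup\mathcal{U}_i$; delete from $G'_i$ the edges joining $\mathcal{O}_i$ to $\mathcal{O}_i\cup\mathcal{U}_i$; add the remaining edges of $E_{i+1}$ to get $G'_{i+1}$; let $M_{i+1}$ be a maximum matching of $G'_{i+1}$ augmenting $M_i$. With $\mathcal{E}_{r+1},\mathcal{O}_{r+1},\mathcal{U}_{r+1}$ the even/odd/unreachable vertices of $G'_{r+1}$, the reduced graph $G'$ is $G'_{r+1}$ minus the edges joining $\mathcal{O}_{r+1}$ to $\mathcal{O}_{r+1}\cup\mathcal{U}_{r+1}$ (independent of choices). Switching graph: for a rank-maximal $M$ (which matches all applicants), $G_M$ is the directed graph on $\mathcal{P}$ with an edge $(p_i,p_j)$ whenever some applicant $a$ has $(a,p_i)\in M$ and $(a,p_j)\in E(G')$, of weight $\mathrm{rank}(a,p_j)-\mathrm{rank}(a,p_i)$; $w(T)$ is the total weight of a path $T$. A sink is a post with no outgoing edge in $G_M$ lying in $\mathcal{E}_1\cap\dots\cap\mathcal{E}_{r+1}$. A sink component is a connected component of the underlying undirected graph of $G_M$ containing at least one sink; other components are non-sink components. *)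

theory Defs
  imports Main
begin

datatype ('a, 'q) vert = Ap 'a | Po 'q

definition adj :: "('a \<times> 'q) set \<Rightarrow> ('a, 'q) vert \<Rightarrow> ('a, 'q) vert \<Rightarrow> bool" where
  "adj F u v \<longleftrightarrow> (\<exists>a q. (a, q) \<in> F \<and> ((u = Ap a \<and> v = Po q) \<or> (u = Po q \<and> v = Ap a)))"

definition is_matching :: "('a \<times> 'q) set \<Rightarrow> ('a \<times> 'q) set \<Rightarrow> bool" where
  "is_matching F N \<longleftrightarrow> N \<subseteq> F \<and>
     (\<forall>a q q'. (a, q) \<in> N \<longrightarrow> (a, q') \<in> N \<longrightarrow> q = q') \<and>
     (\<forall>a a' q. (a, q) \<in> N \<longrightarrow> (a', q) \<in> N \<longrightarrow> a = a')"

definition max_matching :: "('a \<times> 'q) set \<Rightarrow> ('a \<times> 'q) set \<Rightarrow> bool" where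
  "max_matching F N \<longleftrightarrow> is_matching F N \<and> (\<forall>N'. is_matching F N' \<longrightarrow> card N' \<le> card N)"

definition covered :: "('a \<times> 'q) set \<Rightarrow> ('a, 'q) vert \<Rightarrow> bool" where
  "covered N v \<longleftrightarrow> (\<exists>u. adj N v u)"

definition alt_path :: "('a \<times> 'q) set \<Rightarrow> ('a \<times> 'q) set \<Rightarrow> ('a, 'q) vert list \<Rightarrow> bool" where
  "alt_path F N xs \<longleftrightarrow> xs \<noteq> [] \<and> distinct xs \<and> \<not> covered N (hd xs) \<and>
     (\<forall>i. Suc i < length xs \<longrightarrow>
        adj F (xs ! i) (xs ! Suc i) \<and> (adj N (xs ! i) (xs ! Suc i) \<longleftrightarrow> odd i))"

text \<open>Even / odd / unreachable vertices of the graph (V, F), defined w.r.t. a maximum matching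
  (the notion is independent of the chosen maximum matching).\<close>

definition even_vs :: "('a, 'q) vert set \<Rightarrow> ('a \<times> 'q) set \<Rightarrow> ('a, 'q) vert set" where
  "even_vs V F = {v \<in> V. \<exists>N. max_matching F N \<and>
      (\<exists>xs. alt_path F N xs \<and> last xs = v \<and> even (length xs - 1))}"

definition odd_vs :: "('a, 'q) vert set \<Rightarrow> ('a \<times> 'q) set \<Rightarrow> ('a, 'q) vert set" where
  "odd_vs V F = {v \<in> V. \<exists>N. max_matching F N \<and>
      (\<exists>xs. alt_path F N xs \<and> last xs = v \<and> odd (length xs - 1))}"

definition unr_vs :: "('a, 'q) vert set \<Rightarrow> ('a \<times> 'q) set \<Rightarrow> ('a, 'q) vert set" where
  "unr_vs V F = V - even_vs V F - odd_vs V F"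

definition incident :: "('a \<times> 'q) \<Rightarrow> ('a, 'q) vert set \<Rightarrow> bool" where
  "incident e S \<longleftrightarrow> Ap (fst e) \<in> S \<or> Po (snd e) \<in> S"

definition joins_OU :: "('a \<times> 'q) \<Rightarrow> ('a, 'q) vert set \<Rightarrow> ('a, 'q) vert set \<Rightarrow> bool" where
  "joins_OU e Od Ur \<longleftrightarrow> (Ap (fst e) \<in> Od \<and> Po (snd e) \<in> Od \<union> Ur) \<or> (Po (snd e) \<in> Od \<and> Ap (fst e) \<in> Od \<union> Ur)"

text \<open>irv V EE rk k = (edge set of G'_(k+1), edges of rank > k+1 of the instance that have
  not yet been deleted).\<close>

fun irv :: "('a, 'q) vert set \<Rightarrow> ('a \<times> 'q) set \<Rightarrow> ('a \<Rightarrow> 'q \<Rightarrow> nat) \<Rightarrow> nat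
            \<Rightarrow> ('a \<times> 'q) set \<times> ('a \<times> 'q) set" where
  "irv V EE rk 0 = ({e \<in> EE. case_prod rk e = 1}, {e \<in> EE. case_prod rk e > 1})"
| "irv V EE rk (Suc k) =
     (let G = fst (irv V EE rk k); R = snd (irv V EE rk k); i = Suc k;
          Od = odd_vs V G; Ur = unr_vs V G;
          R' = {e \<in> R. \<not> incident e (Od \<union> Ur)}
      in ((G - {e. joins_OU e Od Ur}) \<union> {e \<in> R'. case_prod rk e = Suc i},
          {e \<in> R'. case_prod rk e > Suc i}))"

text \<open>Posts of the extended instance have type 'p + 'a: Inl p is an original post,
  Inr a is the last-resort post l(a) of applicant a, with rank r+1.\<close>

definition rm_instance :: "'a set \<Rightarrow> 'p set \<Rightarrow> ('a \<times> 'p) set \<Rightarrow> ('a \<Rightarrow> 'p \<Rightarrow> nat) \<Rightarrow> nat \<Rightarrow> bool" where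
  "rm_instance A P E rank r \<longleftrightarrow> finite A \<and> finite P \<and> E \<subseteq> A \<times> P \<and>
     (\<forall>(a, p) \<in> E. 1 \<le> rank a p \<and> rank a p \<le> r)"

definition posts :: "'a set \<Rightarrow> 'p set \<Rightarrow> ('p + 'a) set" where
  "posts A P = Inl ` P \<union> Inr ` A"

definition verts :: "'a set \<Rightarrow> 'p set \<Rightarrow> ('a, 'p + 'a) vert set" where
  "verts A P = Ap ` A \<union> Po ` posts A P"

definition xedges :: "'a set \<Rightarrow> ('a \<times> 'p) set \<Rightarrow> ('a \<times> ('p + 'a)) set" where
  "xedges A E = {(a, Inl p) | a p. (a, p) \<in> E} \<union> {(a, Inr a) | a. a \<in> A}"

definition xrank :: "('a \<Rightarrow> 'p \<Rightarrow> nat) \<Rightarrow> nat \<Rightarrow> 'a \<Rightarrow> ('p + 'a) \<Rightarrow> nat" where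
  "xrank rank r a q = (case q of Inl p \<Rightarrow> rank a p | Inr _ \<Rightarrow> r + 1)"

definition Gp :: "'a set \<Rightarrow> 'p set \<Rightarrow> ('a \<times> 'p) set \<Rightarrow> ('a \<Rightarrow> 'p \<Rightarrow> nat) \<Rightarrow> nat \<Rightarrow> nat
                 \<Rightarrow> ('a \<times> ('p + 'a)) set" where
  "Gp A P E rank r i = fst (irv (verts A P) (xedges A E) (xrank rank r) (i - 1))"

definition Ecl where "Ecl A P E rank r i = even_vs (verts A P) (Gp A P E rank r i)"
definition Ocl where "Ocl A P E rank r i = odd_vs (verts A P) (Gp A P E rank r i)"
definition Ucl where "Ucl A P E rank r i = unr_vs (verts A P) (Gp A P E rank r i)"

definition reduced :: "'a set \<Rightarrow> 'p set \<Rightarrow> ('a \<times> 'p) set \<Rightarrow> ('a \<Rightarrow> 'p \<Rightarrow> nat) \<Rightarrow> nat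
                 \<Rightarrow> ('a \<times> ('p + 'a)) set" where
  "reduced A P E rank r = Gp A P E rank r (r + 1) -
     {e. joins_OU e (Ocl A P E rank r (r + 1)) (Ucl A P E rank r (r + 1))}"

definition signature :: "('a \<Rightarrow> 'p \<Rightarrow> nat) \<Rightarrow> nat \<Rightarrow> ('a \<times> ('p + 'a)) set \<Rightarrow> nat list" where
  "signature rank r M = map (\<lambda>i. card {e \<in> M. case_prod (xrank rank r) e = i}) [1..<r + 2]"

definition rank_maximal :: "'a set \<Rightarrow> ('a \<times> 'p) set \<Rightarrow> ('a \<Rightarrow> 'p \<Rightarrow> nat) \<Rightarrow> nat
                 \<Rightarrow> ('a \<times> ('p + 'a)) set \<Rightarrow> bool" where
  "rank_maximal A E rank r M \<longleftrightarrow> is_matching (xedges A E) M \<and>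
     \<not> (\<exists>M'. is_matching (xedges A E) M' \<and>
            (signature rank r M, signature rank r M') \<in> lexord {(x, y). x < y})"

definition sw_edge :: "('a \<times> 'q) set \<Rightarrow> ('a \<times> 'q) set \<Rightarrow> 'q \<Rightarrow> 'q \<Rightarrow> bool" where
  "sw_edge G' M p p' \<longleftrightarrow> p \<noteq> p' \<and> (\<exists>a. (a, p) \<in> M \<and> (a, p') \<in> G')"

definition sw_weight :: "('a \<Rightarrow> 'q \<Rightarrow> nat) \<Rightarrow> ('a \<times> 'q) set \<Rightarrow> 'q \<Rightarrow> 'q \<Rightarrow> int" where
  "sw_weight rk M p p' = (let a = (THE a. (a, p) \<in> M) in int (rk a p') - int (rk a p))"

definition path_weight :: "('a \<Rightarrow> 'q \<Rightarrow> nat) \<Rightarrow> ('a \<times> 'q) set \<Rightarrow> 'q list \<Rightarrow> int" where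
  "path_weight rk M T = (\<Sum>i < length T - 1. sw_weight rk M (T ! i) (T ! Suc i))"

definition dpath :: "'q set \<Rightarrow> ('a \<times> 'q) set \<Rightarrow> ('a \<times> 'q) set \<Rightarrow> 'q list \<Rightarrow> bool" where
  "dpath Q G' M T \<longleftrightarrow> T \<noteq> [] \<and> distinct T \<and> set T \<subseteq> Q \<and>
     (\<forall>i. Suc i < length T \<longrightarrow> sw_edge G' M (T ! i) (T ! Suc i))"

definition is_sink :: "'a set \<Rightarrow> 'p set \<Rightarrow> ('a \<times> 'p) set \<Rightarrow> ('a \<Rightarrow> 'p \<Rightarrow> nat) \<Rightarrow> nat
                 \<Rightarrow> ('a \<times> ('p + 'a)) set \<Rightarrow> ('p + 'a) \<Rightarrow> bool" where
  "is_sink A P E rank r M q \<longleftrightarrow> q \<in> posts A P \<and>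
     \<not> (\<exists>q'. sw_edge (reduced A P E rank r) M q q') \<and>
     (\<forall>i \<in> {1..r + 1}. Po q \<in> Ecl A P E rank r i)"

definition undirected_rel :: "'a set \<Rightarrow> 'p set \<Rightarrow> ('a \<times> 'p) set \<Rightarrow> ('a \<Rightarrow> 'p \<Rightarrow> nat) \<Rightarrow> nat
                 \<Rightarrow> ('a \<times> ('p + 'a)) set \<Rightarrow> (('p + 'a) \<times> ('p + 'a)) set" where
  "undirected_rel A P E rank r M =
     {(x, y). sw_edge (reduced A P E rank r) M x y \<or> sw_edge (reduced A P E rank r) M y x}"

definition in_sink_comp where
  "in_sink_comp A P E rank r M p \<longleftrightarrow> p \<in> posts A P \<and>
     (\<exists>s. is_sink A P E rank r M s \<and> (p, s) \<in> (undirected_rel A P E rank r M)\<^sup>*)"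

definition in_nonsink_comp where
  "in_nonsink_comp A P E rank r M p \<longleftrightarrow> p \<in> posts A P \<and>
     \<not> (\<exists>s. is_sink A P E rank r M s \<and> (p, s) \<in> (undirected_rel A P E rank r M)\<^sup>*)"

end

theory Submission
  imports Defs
begin

text \<open>Everything rests on Irving et al.'s invariant: the edges of M of rank at most i form a
  maximum matching of G'_i.  Together with the Gallai-Edmonds facts about even, odd and
  unreachable vertices (even vertices are those left free by some maximum matching, matched
  pairs are even-odd or unreachable-unreachable, and a matching without O-O and O-U edges that
  covers O \<union> U is maximum) this yields (1), since an unmatched post is free in every
  truncation of M.  For (2), the edges of the switching graph preserve evenness in G'_(r+1), and
  an even post reaches the free post at the start of its even alternating path by switching
  edges, two vertices at a time.  For (3), moving every applicant along T one step forward gives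
  a matching M_T of G'.  The weight of T is the sum over i of the loss in the number of edges of
  rank at most i when passing from M to M_T; each loss is nonnegative by the invariant, and all
  vanish iff every truncation of M_T is a maximum matching of G'_i, i.e. iff the first post of
  T, which M_T leaves free, is even in every G'_i.\<close>

section \<open>Matchings in bipartite graphs\<close>

fun is_Ap :: "('a, 'q) vert \<Rightarrow> bool" where
  "is_Ap (Ap _) = True"
| "is_Ap (Po _) = False"

fun edge_of :: "('a, 'q) vert \<Rightarrow> ('a, 'q) vert \<Rightarrow> 'a \<times> 'q" where
  "edge_of (Ap a) (Po q) = (a, q)"
| "edge_of (Po q) (Ap a) = (a, q)"
| "edge_of _ _ = undefined"

definition has_end :: "'a \<times> 'q \<Rightarrow> ('a, 'q) vert \<Rightarrow> bool" where
  "has_end e v \<longleftrightarrow> v = Ap (fst e) \<or> v = Po (snd e)"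

lemma adj_sym: "adj F u v \<Longrightarrow> adj F v u"
  by (auto simp: adj_def)

lemma adj_mono: "F \<subseteq> G \<Longrightarrow> adj F u v \<Longrightarrow> adj G u v"
  by (auto simp: adj_def)

lemma adj_neq: "adj F u v \<Longrightarrow> u \<noteq> v"
  by (auto simp: adj_def)

lemma adj_is_Ap: "adj F u v \<Longrightarrow> is_Ap u \<longleftrightarrow> \<not> is_Ap v"
  by (auto simp: adj_def)

lemma adj_iff_edge_of: "adj F u v \<longleftrightarrow> adj UNIV u v \<and> edge_of u v \<in> F"
  by (auto simp: adj_def)

lemma has_end_edge_of: "adj F u w \<Longrightarrow> has_end (edge_of u w) v \<longleftrightarrow> v = u \<or> v = w"
  by (auto simp: adj_def has_end_def)

lemma incident_iff_has_end: "incident e S \<longleftrightarrow> (\<exists>v\<in>S. has_end e v)"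
  unfolding incident_def has_end_def by auto

lemma covered_iff_has_end: "covered N v \<longleftrightarrow> (\<exists>e\<in>N. has_end e v)"
  by (cases v) (force simp: covered_def adj_def has_end_def)+

lemma covered_mono: "N \<subseteq> N' \<Longrightarrow> covered N v \<Longrightarrow> covered N' v"
  unfolding covered_def using adj_mono by blast

lemma is_matching_mono: "is_matching F N \<Longrightarrow> N \<subseteq> F' \<Longrightarrow> is_matching F' N"
  unfolding is_matching_def by blast

lemma is_matching_subset: "is_matching F N \<Longrightarrow> N' \<subseteq> N \<Longrightarrow> is_matching F N'"
  unfolding is_matching_def by blast

lemma is_matching_iff_inj:
  "is_matching F N \<longleftrightarrow> N \<subseteq> F \<and> inj_on fst N \<and> inj_on snd N"
proof -
  have "inj_on fst N \<longleftrightarrow> (\<forall>a q q'. (a, q) \<in> N \<longrightarrow> (a, q') \<in> N \<longrightarrow> q = q')"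
  proof
    assume "inj_on fst N"
    then show "\<forall>a q q'. (a, q) \<in> N \<longrightarrow> (a, q') \<in> N \<longrightarrow> q = q'"
      using inj_onD[of fst N "(a, q)" "(a, q')" for a q q'] by auto
  next
    assume H: "\<forall>a q q'. (a, q) \<in> N \<longrightarrow> (a, q') \<in> N \<longrightarrow> q = q'"
    show "inj_on fst N"
    proof (rule inj_onI)
      fix x y assume "x \<in> N" "y \<in> N" "fst x = fst y"
      then show "x = y" using H[rule_format, of "fst x" "snd x" "snd y"] by (metis prod.collapse)
    qed
  qed
  moreover have "inj_on snd N \<longleftrightarrow> (\<forall>a a' q. (a, q) \<in> N \<longrightarrow> (a', q) \<in> N \<longrightarrow> a = a')"
  proof
    assume "inj_on snd N"
    then show "\<forall>a a' q. (a, q) \<in> N \<longrightarrow> (a', q) \<in> N \<longrightarrow> a = a'"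
      using inj_onD[of snd N "(a, q)" "(a', q)" for a a' q] by auto
  next
    assume H: "\<forall>a a' q. (a, q) \<in> N \<longrightarrow> (a', q) \<in> N \<longrightarrow> a = a'"
    show "inj_on snd N"
    proof (rule inj_onI)
      fix x y assume "x \<in> N" "y \<in> N" "snd x = snd y"
      then show "x = y" using H[rule_format, of "fst x" "snd x" "fst y"] by (metis prod.collapse)
    qed
  qed
  ultimately show ?thesis unfolding is_matching_def by (simp only:)
qed

lemma matching_adj_unique: "is_matching F N \<Longrightarrow> adj N u v \<Longrightarrow> adj N v w \<Longrightarrow> u = w"
  unfolding is_matching_def adj_def by blast

lemma matching_has_end_unique:
  assumes "is_matching F N" "e \<in> N" "e' \<in> N" "has_end e v" "has_end e' v"
  shows "e = e'"
proof -
  have "fst e = fst e' \<or> snd e = snd e'"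
    using assms(4,5) unfolding has_end_def by auto
  then show ?thesis
    using assms(1-3) unfolding is_matching_iff_inj by (auto dest: inj_onD)
qed

lemma is_matching_iff_has_end:
  "is_matching F N \<longleftrightarrow> N \<subseteq> F \<and> (\<forall>e\<in>N. \<forall>e'\<in>N. \<forall>v. has_end e v \<longrightarrow> has_end e' v \<longrightarrow> e = e')"
proof
  assume "N \<subseteq> F \<and> (\<forall>e\<in>N. \<forall>e'\<in>N. \<forall>v. has_end e v \<longrightarrow> has_end e' v \<longrightarrow> e = e')"
  moreover have "has_end e (Ap (fst e))" "has_end e (Po (snd e))" for e :: "'a \<times> 'b"
    by (simp_all add: has_end_def)
  ultimately show "is_matching F N"
    unfolding is_matching_iff_inj inj_on_def by metis
next
  assume m: "is_matching F N"
  then have "N \<subseteq> F" by (simp add: is_matching_def)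
  then show "N \<subseteq> F \<and> (\<forall>e\<in>N. \<forall>e'\<in>N. \<forall>v. has_end e v \<longrightarrow> has_end e' v \<longrightarrow> e = e')"
    using matching_has_end_unique[OF m] by blast
qed

lemma max_matching_finite: "finite F \<Longrightarrow> max_matching F N \<Longrightarrow> finite N"
  unfolding max_matching_def is_matching_def using finite_subset by blast

lemma max_matching_is_matching: "max_matching F N \<Longrightarrow> is_matching F N"
  unfolding max_matching_def by blast

lemma walk_is_Ap_parity:
  assumes "\<forall>i. Suc i < length xs \<longrightarrow> adj F (xs ! i) (xs ! Suc i)"
  shows "i < length xs \<Longrightarrow> is_Ap (xs ! i) = (is_Ap (xs ! 0) = even i)"
proof (induction i)
  case (Suc i)
  have "adj F (xs ! i) (xs ! Suc i)" using assms Suc.prems by blast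
  then have "is_Ap (xs ! Suc i) \<longleftrightarrow> \<not> is_Ap (xs ! i)" using adj_is_Ap by blast
  then show ?case using Suc by simp
qed simp

section \<open>Alternating paths and switching\<close>

definition alternating ::
    "('a \<times> 'q) set \<Rightarrow> ('a \<times> 'q) set \<Rightarrow> ('a \<times> 'q) set \<Rightarrow> ('a, 'q) vert list \<Rightarrow> bool" where
  "alternating F X1 X2 xs \<longleftrightarrow> xs \<noteq> [] \<and> distinct xs \<and> (\<forall>i. Suc i < length xs \<longrightarrow>
     adj F (xs ! i) (xs ! Suc i) \<and> (even i \<longrightarrow> adj X1 (xs ! i) (xs ! Suc i)) \<and>
     (odd i \<longrightarrow> adj X2 (xs ! i) (xs ! Suc i)))"

lemma alternating_odd_edge_notin:
  assumes "is_matching F1 X1" "alternating F X1 X2 xs" "odd i" "Suc i < length xs"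
  shows "\<not> adj X1 (xs ! i) (xs ! Suc i)"
proof
  assume edge: "adj X1 (xs ! i) (xs ! Suc i)"
  obtain j where j: "i = Suc j" "even j" using assms(3) by (cases i) auto
  then have "adj X1 (xs ! j) (xs ! i)" using assms(2,4) unfolding alternating_def by auto
  then have "xs ! j = xs ! Suc i" using matching_adj_unique[OF assms(1)] edge by blast
  then show False using assms(2,4) j nth_eq_iff_index_eq unfolding alternating_def by fastforce
qed

lemma alternating_even_edge_notin:
  assumes "is_matching F2 X2" "alternating F X1 X2 xs" "\<not> covered X2 (hd xs)" "even i"
    "Suc i < length xs"
  shows "\<not> adj X2 (xs ! i) (xs ! Suc i)"
proof
  assume edge: "adj X2 (xs ! i) (xs ! Suc i)"
  show False
  proof (cases i)
    case 0
    then have "covered X2 (xs ! 0)" using edge by (auto simp: covered_def)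
    then show False using assms(2,3) by (simp add: alternating_def hd_conv_nth)
  next
    case (Suc j)
    then have "adj X2 (xs ! j) (xs ! i)" using assms(2,4,5) unfolding alternating_def by auto
    then have "xs ! j = xs ! Suc i" using matching_adj_unique[OF assms(1)] edge by blast
    then show False using assms(2,5) Suc nth_eq_iff_index_eq unfolding alternating_def by fastforce
  qed
qed

lemma alternating_imp_alt_path:
  assumes "alternating F X1 N xs" "is_matching F' N" "\<not> covered N (hd xs)"
  shows "alt_path F N xs"
  using assms alternating_even_edge_notin[OF assms(2,1,3)] unfolding alternating_def alt_path_def
  by blast

lemma alternating_rev:
  assumes "alternating F X1 X2 xs" "even (length xs - 1)"
  shows "alternating F X2 X1 (rev xs)"
proof -
  have "adj F (rev xs ! i) (rev xs ! Suc i) \<and> (even i \<longrightarrow> adj X2 (rev xs ! i) (rev xs ! Suc i))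
      \<and> (odd i \<longrightarrow> adj X1 (rev xs ! i) (rev xs ! Suc i))" if i: "Suc i < length xs" for i
  proof -
    define j where "j = length xs - Suc (Suc i)"
    have j: "Suc j < length xs" using i by (simp add: j_def)
    have rev_nth: "rev xs ! i = xs ! Suc j" "rev xs ! Suc i = xs ! j"
      using i by (simp_all add: rev_nth j_def Suc_diff_Suc)
    have "even i \<longleftrightarrow> odd j" using assms(2) i unfolding j_def by presburger
    moreover have "adj F (xs ! j) (xs ! Suc j) \<and> (even j \<longrightarrow> adj X1 (xs ! j) (xs ! Suc j))
        \<and> (odd j \<longrightarrow> adj X2 (xs ! j) (xs ! Suc j))"
      using assms(1) j unfolding alternating_def by blast
    ultimately show ?thesis using rev_nth adj_sym by metis
  qed
  then show ?thesis using assms(1) unfolding alternating_def by auto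
qed

lemma alternating_snoc:
  assumes "alternating F X1 X2 xs" "w \<notin> set xs" "adj F (last xs) w"
    "even (length xs - 1) \<Longrightarrow> adj X1 (last xs) w" "odd (length xs - 1) \<Longrightarrow> adj X2 (last xs) w"
  shows "alternating F X1 X2 (xs @ [w])"
proof -
  have ne: "xs \<noteq> []" using assms(1) by (simp add: alternating_def)
  have "adj F ((xs @ [w]) ! i) ((xs @ [w]) ! Suc i)
      \<and> (even i \<longrightarrow> adj X1 ((xs @ [w]) ! i) ((xs @ [w]) ! Suc i))
      \<and> (odd i \<longrightarrow> adj X2 ((xs @ [w]) ! i) ((xs @ [w]) ! Suc i))" if i: "Suc i < length (xs @ [w])" for i
  proof (cases "Suc i < length xs")
    case True
    then show ?thesis using assms(1) by (simp add: nth_append alternating_def)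
  next
    case False
    then have "i = length xs - 1" using i by simp
    moreover have "(xs @ [w]) ! (length xs - 1) = last xs" using ne by (simp add: nth_append last_conv_nth)
    ultimately show ?thesis using assms(3-5) ne by (simp add: nth_append)
  qed
  then show ?thesis using assms(1,2) unfolding alternating_def by auto
qed

lemma alt_path_take:
  assumes "alt_path F N xs" "0 < n" "n \<le> length xs"
  shows "alt_path F N (take n xs)" "last (take n xs) = xs ! (n - 1)"
  using assms by (auto simp: alt_path_def distinct_take last_conv_nth min_def)

lemma alt_path_snoc:
  assumes "alt_path F N xs" "w \<notin> set xs" "adj F (last xs) w"
    "adj N (last xs) w \<longleftrightarrow> odd (length xs - 1)"
  shows "alt_path F N (xs @ [w])"
proof -
  have ne: "xs \<noteq> []" using assms(1) by (simp add: alt_path_def)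
  have "adj F ((xs @ [w]) ! i) ((xs @ [w]) ! Suc i)
      \<and> (adj N ((xs @ [w]) ! i) ((xs @ [w]) ! Suc i) \<longleftrightarrow> odd i)" if i: "Suc i < length (xs @ [w])" for i
  proof (cases "Suc i < length xs")
    case True
    then show ?thesis using assms(1) by (simp add: nth_append alt_path_def)
  next
    case False
    then have "i = length xs - 1" using i by simp
    moreover have "(xs @ [w]) ! (length xs - 1) = last xs" using ne by (simp add: nth_append last_conv_nth)
    ultimately show ?thesis using assms(3,4) ne by (simp add: nth_append)
  qed
  then show ?thesis using assms(1,2) ne unfolding alt_path_def by auto
qed

lemma card_odd_less: "card {i. i < k \<and> odd i} = k div 2"
proof (induction k)
  case (Suc k)
  show ?case
  proof (cases "odd k")
    case True
    then have "{i. i < Suc k \<and> odd i} = insert k {i. i < k \<and> odd i}" by (auto simp: less_Suc_eq)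
    then show ?thesis using Suc True by (simp; presburger)
  next
    case False
    then have "{i. i < Suc k \<and> odd i} = {i. i < k \<and> odd i}" by (auto simp: less_Suc_eq)
    then show ?thesis using Suc False by (simp; presburger)
  qed
qed simp

lemma card_even_less: "card {i. i < k \<and> even i} = (k + 1) div 2"
proof (induction k)
  case (Suc k)
  show ?case
  proof (cases "even k")
    case True
    then have "{i. i < Suc k \<and> even i} = insert k {i. i < k \<and> even i}" by (auto simp: less_Suc_eq)
    then show ?thesis using Suc True by (simp; presburger)
  next
    case False
    then have "{i. i < Suc k \<and> even i} = {i. i < k \<and> even i}" by (auto simp: less_Suc_eq)
    then show ?thesis using Suc False by (simp; presburger)
  qed
qed simp

definition path_edge :: "('a, 'q) vert list \<Rightarrow> nat \<Rightarrow> 'a \<times> 'q" where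
  "path_edge xs i = edge_of (xs ! i) (xs ! Suc i)"

definition switch :: "('a \<times> 'q) set \<Rightarrow> ('a, 'q) vert list \<Rightarrow> ('a \<times> 'q) set" where
  "switch N xs = (N - {path_edge xs i |i. Suc i < length xs \<and> odd i})
     \<union> {path_edge xs i |i. Suc i < length xs \<and> even i}"

lemma has_end_path_edge:
  "adj F (xs ! i) (xs ! Suc i) \<Longrightarrow> has_end (path_edge xs i) v \<longleftrightarrow> v = xs ! i \<or> v = xs ! Suc i"
  unfolding path_edge_def using has_end_edge_of adj_mono by blast

lemma alt_path_adj: "alt_path F N xs \<Longrightarrow> Suc i < length xs \<Longrightarrow> adj F (xs ! i) (xs ! Suc i)"
  unfolding alt_path_def by blast

lemma alt_path_adj_iff:
  "alt_path F N xs \<Longrightarrow> Suc i < length xs \<Longrightarrow> adj N (xs ! i) (xs ! Suc i) \<longleftrightarrow> odd i"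
  unfolding alt_path_def by blast

lemma alt_path_is_Ap_parity:
  "alt_path F N xs \<Longrightarrow> i < length xs \<Longrightarrow> is_Ap (xs ! i) = (is_Ap (xs ! 0) = even i)"
  using walk_is_Ap_parity[of xs F i] unfolding alt_path_def by blast

context
  fixes F N :: "('a \<times> 'q) set" and xs :: "('a, 'q) vert list"
  assumes matching: "is_matching F N" and path: "alt_path F N xs"
begin

lemma path_edge_in_F: "Suc i < length xs \<Longrightarrow> path_edge xs i \<in> F"
  using alt_path_adj[OF path] adj_iff_edge_of unfolding path_edge_def by metis

lemma path_edge_in_iff: "Suc i < length xs \<Longrightarrow> path_edge xs i \<in> N \<longleftrightarrow> odd i"
  using path alt_path_adj[OF path] adj_iff_edge_of[of N] adj_iff_edge_of[of F]
  unfolding path_edge_def alt_path_def by metis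

lemma path_edge_inj: "inj_on (path_edge xs) {i. Suc i < length xs}"
proof (rule inj_onI)
  fix i j assume ij: "i \<in> {i. Suc i < length xs}" "j \<in> {i. Suc i < length xs}"
    and eq: "path_edge xs i = path_edge xs j"
  have dist: "distinct xs" using path by (simp add: alt_path_def)
  have "xs ! i = xs ! j \<or> xs ! i = xs ! Suc j" "xs ! Suc i = xs ! j \<or> xs ! Suc i = xs ! Suc j"
    using has_end_path_edge[OF alt_path_adj[OF path]] ij eq by (metis mem_Collect_eq)+
  then have "(i = j \<or> i = Suc j) \<and> (Suc i = j \<or> Suc i = Suc j)"
    using ij nth_eq_iff_index_eq[OF dist] by (metis Suc_lessD mem_Collect_eq)
  then show "i = j" by auto
qed

lemma matched_edge_on_path:
  assumes ends: "odd (length xs - 1) \<longrightarrow> \<not> covered N (last xs)"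
    and e: "e \<in> N" "m < length xs" "has_end e (xs ! m)"
  shows "\<exists>i. Suc i < length xs \<and> odd i \<and> e = path_edge xs i"
proof (cases "odd m")
  case True
  show ?thesis
  proof (cases "Suc m < length xs")
    case True
    then have "e = path_edge xs m"
      using matching_has_end_unique[OF matching e(1)] path_edge_in_iff \<open>odd m\<close> e(3)
        has_end_path_edge[OF alt_path_adj[OF path]] by blast
    then show ?thesis using True \<open>odd m\<close> by blast
  next
    case False
    then have m: "m = length xs - 1" using e(2) by simp
    then have "xs ! m = last xs" using path by (simp add: alt_path_def last_conv_nth)
    then have "covered N (last xs)" using e(1,3) covered_iff_has_end by metis
    then show ?thesis using ends \<open>odd m\<close> m by simp
  qed
next
  case False
  show ?thesis
  proof (cases m)
    case 0
    then show ?thesis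
      using path e covered_iff_has_end by (metis alt_path_def hd_conv_nth)
  next
    case (Suc j)
    then have j: "Suc j < length xs" "odd j" using e(2) False by auto
    then have "e = path_edge xs j"
      using matching_has_end_unique[OF matching e(1)] path_edge_in_iff e(3) Suc
        has_end_path_edge[OF alt_path_adj[OF path]] by blast
    then show ?thesis using j by blast
  qed
qed

lemma matched_edge_meeting_path_edge:
  assumes ends: "odd (length xs - 1) \<longrightarrow> \<not> covered N (last xs)"
    and "f \<in> N" "Suc j < length xs" "has_end f v" "has_end (path_edge xs j) v"
  shows "\<exists>i. Suc i < length xs \<and> odd i \<and> f = path_edge xs i"
proof -
  have "v = xs ! j \<or> v = xs ! Suc j"
    using has_end_path_edge[OF alt_path_adj[OF path assms(3)]] assms(5) by blast
  then obtain m where "m < length xs" "v = xs ! m" using assms(3) Suc_lessD by blast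
  then show ?thesis using matched_edge_on_path[OF ends assms(2)] assms(4) by blast
qed

lemma even_path_edges_meet:
  assumes "Suc i < length xs" "even i" "Suc j < length xs" "even j"
    and "has_end (path_edge xs i) v" "has_end (path_edge xs j) v"
  shows "i = j"
proof -
  have "(v = xs ! i \<or> v = xs ! Suc i) \<and> (v = xs ! j \<or> v = xs ! Suc j)"
    using assms has_end_path_edge[OF alt_path_adj[OF path]] by blast
  then have "i = j \<or> i = Suc j \<or> Suc i = j \<or> Suc i = Suc j"
    using assms(1,3) path nth_eq_iff_index_eq unfolding alt_path_def by (metis Suc_lessD)
  then show ?thesis using assms(2,4) by auto
qed

lemma switch_is_matching:
  assumes ends: "odd (length xs - 1) \<longrightarrow> \<not> covered N (last xs)"
  shows "is_matching F (switch N xs)"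
proof -
  define Od where "Od = {path_edge xs i |i. Suc i < length xs \<and> odd i}"
  define Ev where "Ev = {path_edge xs i |i. Suc i < length xs \<and> even i}"
  have sw: "switch N xs = (N - Od) \<union> Ev" unfolding switch_def Od_def Ev_def ..
  have mixed: False if "f \<in> N - Od" "f' \<in> Ev" "has_end f v" "has_end f' v" for f f' v
    using that matched_edge_meeting_path_edge[OF ends] unfolding Od_def Ev_def by blast
  have "e = e'" if e: "e \<in> switch N xs" "e' \<in> switch N xs" "has_end e v" "has_end e' v"
    for e e' v
  proof -
    consider "e \<in> Ev" "e' \<in> Ev" | "e \<in> N - Od" "e' \<in> Ev" | "e \<in> Ev" "e' \<in> N - Od"
      | "e \<in> N" "e' \<in> N"
      using e(1,2) unfolding sw by blast
    then show ?thesis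
    proof cases
      case 1
      then show ?thesis using even_path_edges_meet e(3,4) unfolding Ev_def by blast
    qed (use mixed e(3,4) matching_has_end_unique[OF matching] in blast)+
  qed
  moreover have "switch N xs \<subseteq> F"
    using matching path_edge_in_F unfolding switch_def is_matching_def by auto
  ultimately show ?thesis unfolding is_matching_iff_has_end by blast
qed

lemma card_switch:
  assumes "finite N"
  shows "card (switch N xs) = card N + (length xs - 1) mod 2"
proof -
  define k where "k = length xs - 1"
  define Od where "Od = path_edge xs ` {i. i < k \<and> odd i}"
  define Ev where "Ev = path_edge xs ` {i. i < k \<and> even i}"
  have sw: "switch N xs = (N - Od) \<union> Ev"
    unfolding switch_def Od_def Ev_def k_def by auto
  have inj: "inj_on (path_edge xs) {i. i < k \<and> P i}" for P
    using path_edge_inj by (rule inj_on_subset) (auto simp: k_def)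
  have "card Od = k div 2" "card Ev = (k + 1) div 2"
    unfolding Od_def Ev_def using card_image[OF inj] card_odd_less card_even_less by simp_all
  moreover have "Od \<subseteq> N" "Ev \<inter> N = {}"
    using path_edge_in_iff unfolding Od_def Ev_def k_def by auto
  moreover have "finite Od" "finite Ev" unfolding Od_def Ev_def by simp_all
  ultimately have "card (switch N xs) = card N - k div 2 + (k + 1) div 2"
    unfolding sw using assms card_Un_disjoint[of "N - Od" Ev] card_Diff_subset[of Od N] by auto
  moreover have "k div 2 \<le> card N"
    using card_mono[OF assms \<open>Od \<subseteq> N\<close>] \<open>card Od = k div 2\<close> by simp
  moreover have "(k + 1) div 2 = k div 2 + k mod 2" by presburger
  ultimately show ?thesis unfolding k_def[symmetric] by linarith
qed

lemma path_edge_in_switch: "Suc i < length xs \<Longrightarrow> even i \<Longrightarrow> path_edge xs i \<in> switch N xs"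
  unfolding switch_def by auto

lemma switch_removed:
  "e \<in> N \<Longrightarrow> e \<notin> switch N xs \<Longrightarrow> \<exists>i. Suc i < length xs \<and> odd i \<and> e = path_edge xs i"
  unfolding switch_def by auto

lemma switch_uncovers_last:
  assumes "even (length xs - 1)"
  shows "\<not> covered (switch N xs) (last xs)"
proof
  define n where "n = length xs - 1"
  have n: "n < length xs" "xs ! n = last xs"
    using path by (auto simp: n_def alt_path_def last_conv_nth)
  assume "covered (switch N xs) (last xs)"
  then obtain e where e: "e \<in> switch N xs" "has_end e (xs ! n)"
    using covered_iff_has_end n(2) by metis
  show False
  proof (cases "e \<in> N")
    case True
    then obtain i where "Suc i < length xs" "odd i" "e = path_edge xs i"
      using matched_edge_on_path[of e n] assms e(2) n(1) by (auto simp: n_def)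
    then obtain j where "Suc j < length xs" "even j" "e = path_edge xs j"
      using e(1) unfolding switch_def by blast
    then show False using True path_edge_in_iff by auto
  next
    case False
    then obtain i where i: "Suc i < length xs" "even i" "e = path_edge xs i"
      using e(1) unfolding switch_def by blast
    then have "xs ! n = xs ! i \<or> xs ! n = xs ! Suc i"
      using e(2) has_end_path_edge[OF alt_path_adj[OF path]] by blast
    then have "n = i \<or> n = Suc i"
      using path n(1) i(1) nth_eq_iff_index_eq unfolding alt_path_def by (metis Suc_lessD)
    then show False using i(1,2) assms unfolding n_def by presburger
  qed
qed

lemma covered_switch:
  assumes "odd (length xs - 1)" "covered N v"
  shows "covered (switch N xs) v"
proof -
  obtain e where e: "e \<in> N" "has_end e v" using assms(2) covered_iff_has_end by metis
  show ?thesis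
  proof (cases "e \<in> switch N xs")
    case False
    then obtain i where i: "Suc i < length xs" "odd i" "e = path_edge xs i"
      using switch_removed e(1) by blast
    then have "v = xs ! i \<or> v = xs ! Suc i"
      using e(2) has_end_path_edge[OF alt_path_adj[OF path]] by blast
    then show ?thesis
    proof
      assume v: "v = xs ! i"
      obtain j where j: "i = Suc j" using i(2) by (cases i) auto
      then have "has_end (path_edge xs j) v" "path_edge xs j \<in> switch N xs"
        using i v has_end_path_edge[OF alt_path_adj[OF path]] path_edge_in_switch by auto
      then show ?thesis using covered_iff_has_end by blast
    next
      assume v: "v = xs ! Suc i"
      have "Suc (Suc i) < length xs" using i(1,2) assms(1) by presburger
      then have "has_end (path_edge xs (Suc i)) v" "path_edge xs (Suc i) \<in> switch N xs"
        using i v has_end_path_edge[OF alt_path_adj[OF path]] path_edge_in_switch by auto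
      then show ?thesis using covered_iff_has_end by blast
    qed
  qed (use e covered_iff_has_end in blast)
qed

end

lemma augmenting_path_not_max:
  assumes "is_matching F N" "finite N" "alt_path F N xs" "odd (length xs - 1)"
    "\<not> covered N (last xs)"
  shows "\<not> max_matching F N"
proof -
  have "(length xs - 1) mod 2 = 1" using assms(4) by presburger
  then have "is_matching F (switch N xs)" "card (switch N xs) = card N + 1"
    using switch_is_matching[OF assms(1,3)] card_switch[OF assms(1,3,2)] assms(4,5) by auto
  then show ?thesis unfolding max_matching_def by fastforce
qed

lemma alternating_X1_partner_notin:
  assumes "is_matching F1 X1" "alternating F X1 X2 xs" "even (length xs - 1)"
    "adj X1 (last xs) w"
  shows "w \<notin> set xs"
proof
  define k where "k = length xs - 1"
  have dist: "distinct xs" and k: "k < length xs" "last xs = xs ! k"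
    using assms(2) by (auto simp: alternating_def k_def last_conv_nth)
  have edges: "\<And>j. Suc j < length xs \<Longrightarrow> even j \<Longrightarrow> adj X1 (xs ! j) (xs ! Suc j)"
    using assms(2) by (simp add: alternating_def)
  assume "w \<in> set xs"
  then obtain j where j: "j < length xs" "w = xs ! j" by (auto simp: in_set_conv_nth)
  have wk: "adj X1 (xs ! j) (xs ! k)" using assms(4) j k adj_sym by metis
  then have "j \<noteq> k" using adj_neq by blast
  then have jk: "j < k" using j(1) k_def by simp
  show False
  proof (cases "even j")
    case True
    then have "xs ! Suc j = xs ! k"
      using matching_adj_unique[OF assms(1) adj_sym[OF edges] wk] jk k_def by simp
    then have "Suc j = k" using nth_eq_iff_index_eq[OF dist] jk k by simp
    then show False using True assms(3) k_def by presburger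
  next
    case False
    then obtain i where i: "j = Suc i" "even i" by (cases j) auto
    then have "adj X1 (xs ! i) (xs ! j)" using edges[of i] jk k by simp
    then have "xs ! i = xs ! k" using matching_adj_unique[OF assms(1) _ wk] by simp
    then show False using nth_eq_iff_index_eq[OF dist] i jk k by simp
  qed
qed

lemma alternating_X2_partner_notin:
  assumes "is_matching F2 X2" "alternating F X1 X2 xs" "\<not> covered X2 (hd xs)"
    "odd (length xs - 1)" "adj X2 (last xs) w"
  shows "w \<notin> set xs"
proof
  define k where "k = length xs - 1"
  have dist: "distinct xs" and k: "k < length xs" "last xs = xs ! k" "hd xs = xs ! 0"
    using assms(2) by (auto simp: alternating_def k_def last_conv_nth hd_conv_nth)
  have edges: "\<And>j. Suc j < length xs \<Longrightarrow> odd j \<Longrightarrow> adj X2 (xs ! j) (xs ! Suc j)"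
    using assms(2) by (simp add: alternating_def)
  assume "w \<in> set xs"
  then obtain j where j: "j < length xs" "w = xs ! j" by (auto simp: in_set_conv_nth)
  have wk: "adj X2 (xs ! j) (xs ! k)" using assms(5) j k adj_sym by metis
  then have "j \<noteq> k" using adj_neq by blast
  then have jk: "j < k" using j(1) k_def by simp
  show False
  proof (cases "odd j")
    case True
    then have "xs ! Suc j = xs ! k"
      using matching_adj_unique[OF assms(1) adj_sym[OF edges] wk] jk k_def by simp
    then have "Suc j = k" using nth_eq_iff_index_eq[OF dist] jk k by simp
    then show False using True assms(4) k_def by presburger
  next
    case False
    show False
    proof (cases j)
      case 0
      then show False using wk assms(3) k(3) unfolding covered_def by auto
    next
      case (Suc i)
      then have "odd i" using False by simp
      then have "adj X2 (xs ! i) (xs ! j)" using edges[of i] Suc jk k by simp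
      then have "xs ! i = xs ! k" using matching_adj_unique[OF assms(1) _ wk] by simp
      then show False using nth_eq_iff_index_eq[OF dist] Suc jk k by simp
    qed
  qed
qed

lemma adj_end_in_edges: "adj X u w \<Longrightarrow> w \<in> Ap ` fst ` X \<union> Po ` snd ` X"
  by (auto simp: adj_def image_iff) (metis fst_conv snd_conv)+

lemma alternating_set_subset:
  assumes "alternating F X1 X2 xs"
  shows "set xs \<subseteq> insert (hd xs) (Ap ` fst ` (X1 \<union> X2) \<union> Po ` snd ` (X1 \<union> X2))"
proof
  fix x assume "x \<in> set xs"
  then obtain j where j: "j < length xs" "x = xs ! j" by (auto simp: in_set_conv_nth)
  show "x \<in> insert (hd xs) (Ap ` fst ` (X1 \<union> X2) \<union> Po ` snd ` (X1 \<union> X2))"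
  proof (cases j)
    case 0
    then show ?thesis using j assms by (simp add: alternating_def hd_conv_nth)
  next
    case (Suc i)
    then have i: "Suc i < length xs" "x = xs ! Suc i" using j by simp_all
    then have "(even i \<longrightarrow> adj X1 (xs ! i) (xs ! Suc i)) \<and> (odd i \<longrightarrow> adj X2 (xs ! i) (xs ! Suc i))"
      using assms unfolding alternating_def by blast
    then have "adj X1 (xs ! i) x \<or> adj X2 (xs ! i) x" using i(2) by auto
    then have "adj (X1 \<union> X2) (xs ! i) x" using adj_mono[OF Un_upper1] adj_mono[OF Un_upper2] by blast
    then show ?thesis using adj_end_in_edges by (intro insertI2)
  qed
qed

text \<open>Take a longest such path: if its last vertex were matched in the matching of the next
  edge, the path could be extended.\<close>

lemma longest_alternating_path:
  assumes m1: "is_matching F1 X1" and m2: "is_matching F2 X2" and "X1 \<subseteq> F" "X2 \<subseteq> F"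
    and "finite X1" "finite X2" and v: "\<not> covered X2 v"
  shows "\<exists>xs. alternating F X1 X2 xs \<and> hd xs = v
    \<and> (odd (length xs - 1) \<longrightarrow> \<not> covered X2 (last xs))
    \<and> (even (length xs - 1) \<longrightarrow> \<not> covered X1 (last xs))"
proof -
  define S where "S xs \<longleftrightarrow> alternating F X1 X2 xs \<and> hd xs = v" for xs
  define Vt where "Vt = insert v (Ap ` fst ` (X1 \<union> X2) \<union> Po ` snd ` (X1 \<union> X2))"
  have "finite Vt" unfolding Vt_def using assms by simp
  then have "length xs < Suc (card Vt)" if "S xs" for xs
    using that alternating_set_subset card_mono distinct_card
    unfolding S_def alternating_def Vt_def by (metis less_Suc_eq_le)
  moreover have "S [v]" unfolding S_def alternating_def by simp
  ultimately obtain xs where xs: "S xs" and longest: "\<And>ys. S ys \<Longrightarrow> length ys \<le> length xs"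
    using ex_has_greatest_nat[of S "[v]" length "Suc (card Vt)"] by blast
  have alt: "alternating F X1 X2 xs" and hd: "hd xs = v" using xs by (auto simp: S_def)
  have no_ext: False if "w \<notin> set xs" "adj F (last xs) w"
      "even (length xs - 1) \<Longrightarrow> adj X1 (last xs) w" "odd (length xs - 1) \<Longrightarrow> adj X2 (last xs) w"
    for w
  proof -
    have "xs \<noteq> []" using alt by (simp add: alternating_def)
    then have "S (xs @ [w])" using alternating_snoc[OF alt that] hd unfolding S_def by simp
    then show False using longest[of "xs @ [w]"] by simp
  qed
  have "\<not> covered X1 (last xs)" if "even (length xs - 1)"
    using alternating_X1_partner_notin[OF m1 alt that] no_ext adj_mono[OF \<open>X1 \<subseteq> F\<close>] that
    unfolding covered_def by blast
  moreover have "\<not> covered X2 (last xs)" if "odd (length xs - 1)"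
    using alternating_X2_partner_notin[OF m2 alt _ that] hd v no_ext adj_mono[OF \<open>X2 \<subseteq> F\<close>] that
    unfolding covered_def by blast
  ultimately show ?thesis using alt hd by blast
qed

lemma switch_even_path_diff_psubset:
  assumes mN: "is_matching F N" and mK: "is_matching F K"
    and alt: "alternating F N K ys" and path: "alt_path F K ys" and len: "Suc 0 < length ys"
  shows "N - switch K ys \<subset> N - K"
proof -
  have "e \<notin> K" if e: "e \<in> N - switch K ys" for e
  proof
    assume "e \<in> K"
    then obtain i where i: "Suc i < length ys" "odd i" "e = path_edge ys i"
      using switch_removed[OF mK path] e by blast
    then have "\<not> adj N (ys ! i) (ys ! Suc i)"
      using alternating_odd_edge_notin[OF mN alt] by blast
    then show False
      using e i alt_path_adj[OF path] adj_iff_edge_of[of N] adj_iff_edge_of[of F]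
      unfolding path_edge_def by blast
  qed
  moreover have "path_edge ys 0 \<in> N - K" "path_edge ys 0 \<in> switch K ys"
  proof -
    have "adj N (ys ! 0) (ys ! Suc 0)" "\<not> adj K (ys ! 0) (ys ! Suc 0)"
      using alt path len by (simp_all add: alternating_def alt_path_def)
    then show "path_edge ys 0 \<in> N - K" using adj_iff_edge_of unfolding path_edge_def by blast
    show "path_edge ys 0 \<in> switch K ys" using path_edge_in_switch[OF mK path] len by simp
  qed
  ultimately show ?thesis by blast
qed

lemma larger_matching_covers_free_applicant:
  assumes "is_matching F N" "is_matching F' K" "finite N" "card N < card K"
  shows "\<exists>a. \<not> covered N (Ap a) \<and> covered K (Ap a)"
proof -
  have "card (fst ` N) < card (fst ` K)"
    using assms card_image unfolding is_matching_iff_inj by metis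
  then obtain a q where aq: "(a, q) \<in> K" "a \<notin> fst ` N"
    using card_mono[OF finite_imageI[OF assms(3)]] by (metis not_le subsetI surjective_pairing image_iff)
  then have "\<not> covered N (Ap a)" "covered K (Ap a)"
    by (auto simp: covered_def adj_def image_iff)
  then show ?thesis by blast
qed

text \<open>Induction on the size of N - K: when the longest alternating path from a free
  applicant of N ends evenly, switching K along it keeps the size of K and shrinks N - K.\<close>

theorem augmenting_path_exists:
  assumes fF: "finite F" and mN: "is_matching F N" and "is_matching F K" "card N < card K"
  shows "\<exists>xs. alt_path F N xs \<and> odd (length xs - 1) \<and> \<not> covered N (last xs)"
  using assms(3,4)
proof (induction "card (N - K)" arbitrary: K rule: less_induct)
  case less
  have fin: "finite N" "finite K" "N \<subseteq> F" "K \<subseteq> F"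
    using mN less.prems(1) fF finite_subset unfolding is_matching_def by metis+
  obtain a where freeN: "\<not> covered N (Ap a)" and coverK: "covered K (Ap a)"
    using larger_matching_covers_free_applicant[OF mN less.prems(1) fin(1) less.prems(2)] by blast
  obtain xs where alt: "alternating F K N xs" and hd: "hd xs = Ap a"
    and ends: "odd (length xs - 1) \<longrightarrow> \<not> covered N (last xs)"
      "even (length xs - 1) \<longrightarrow> \<not> covered K (last xs)"
    using longest_alternating_path[OF less.prems(1) mN fin(4,3,2,1) freeN] by blast
  show ?case
  proof (cases "odd (length xs - 1)")
    case True
    then show ?thesis using alternating_imp_alt_path[OF alt mN] hd freeN ends by auto
  next
    case False
    define ys where "ys = rev xs"
    have ne: "xs \<noteq> []" using alt by (simp add: alternating_def)
    have altys: "alternating F N K ys" unfolding ys_def using alternating_rev[OF alt] False by simp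
    have freeK: "\<not> covered K (last xs)" using ends(2) False by blast
    have "hd ys = last xs" using ne by (simp add: ys_def hd_rev)
    then have pathK: "alt_path F K ys"
      using alternating_imp_alt_path[OF altys less.prems(1)] freeK by simp
    have "last xs \<noteq> hd xs" using hd coverK freeK by auto
    then have len: "Suc 0 < length ys"
      using ne by (cases xs) (auto simp: ys_def)
    have "even (length ys - 1)" using False by (simp add: ys_def)
    then have "is_matching F (switch K ys)" "card (switch K ys) = card K"
      using switch_is_matching[OF less.prems(1) pathK] card_switch[OF less.prems(1) pathK fin(2)]
      by simp_all
    moreover have "card (N - switch K ys) < card (N - K)"
      using switch_even_path_diff_psubset[OF mN less.prems(1) altys pathK len] fin(1)
      by (meson finite_Diff psubset_card_mono)
    ultimately show ?thesis using less.hyps less.prems(2) by simp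
  qed
qed

section \<open>Even, odd and unreachable vertices\<close>

definition even_reach :: "('a \<times> 'q) set \<Rightarrow> ('a \<times> 'q) set \<Rightarrow> ('a, 'q) vert \<Rightarrow> bool" where
  "even_reach F N v \<longleftrightarrow> (\<exists>xs. alt_path F N xs \<and> last xs = v \<and> even (length xs - 1))"

definition odd_reach :: "('a \<times> 'q) set \<Rightarrow> ('a \<times> 'q) set \<Rightarrow> ('a, 'q) vert \<Rightarrow> bool" where
  "odd_reach F N v \<longleftrightarrow> (\<exists>xs. alt_path F N xs \<and> last xs = v \<and> odd (length xs - 1))"

lemma even_reach_free: "\<not> covered N v \<Longrightarrow> even_reach F N v"
  unfolding even_reach_def by (rule exI[of _ "[v]"]) (simp add: alt_path_def)

lemma alt_path_reach_nth:
  assumes "alt_path F N xs" "j < length xs"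
  shows "even j \<Longrightarrow> even_reach F N (xs ! j)" "odd j \<Longrightarrow> odd_reach F N (xs ! j)"
proof -
  have "alt_path F N (take (Suc j) xs)" "last (take (Suc j) xs) = xs ! j"
    "length (take (Suc j) xs) - 1 = j"
    using alt_path_take[OF assms(1), of "Suc j"] assms(2) by auto
  then show "even j \<Longrightarrow> even_reach F N (xs ! j)" "odd j \<Longrightarrow> odd_reach F N (xs ! j)"
    unfolding even_reach_def odd_reach_def by metis+
qed

lemma free_in_max_imp_even_reach:
  assumes fF: "finite F" and mN: "max_matching F N" and mN': "max_matching F N'"
    and v: "\<not> covered N' v"
  shows "even_reach F N v"
proof -
  have m: "is_matching F N" "is_matching F N'" using mN mN' max_matching_is_matching by auto
  have s: "N \<subseteq> F" "N' \<subseteq> F" using m by (auto simp: is_matching_def)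
  have f: "finite N" "finite N'" using mN mN' fF max_matching_finite by auto
  obtain xs where xs: "alternating F N N' xs" "hd xs = v"
    "odd (length xs - 1) \<longrightarrow> \<not> covered N' (last xs)"
    "even (length xs - 1) \<longrightarrow> \<not> covered N (last xs)"
    using longest_alternating_path[OF m s f v] by blast
  show ?thesis
  proof (cases "odd (length xs - 1)")
    case True
    have "alt_path F N' xs" using alternating_imp_alt_path[OF xs(1) m(2)] xs(2) v by simp
    then show ?thesis using augmenting_path_not_max[OF m(2) f(2)] True xs(3) mN' by blast
  next
    case False
    have ne: "xs \<noteq> []" using xs(1) by (simp add: alternating_def)
    have "alternating F N' N (rev xs)" using alternating_rev[OF xs(1)] False by simp
    moreover have "\<not> covered N (hd (rev xs))" using xs(4) False ne by (simp add: hd_rev)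
    ultimately have "alt_path F N (rev xs)" using alternating_imp_alt_path m(1) by blast
    moreover have "last (rev xs) = v" using ne xs(2) by (simp add: last_rev)
    ultimately show ?thesis unfolding even_reach_def using False by auto
  qed
qed

lemma even_reach_switch:
  assumes "finite F" "max_matching F N" "alt_path F N xs" "even (length xs - 1)"
  shows "max_matching F (switch N xs)" "\<not> covered (switch N xs) (last xs)"
proof -
  have m: "is_matching F N" "finite N"
    using assms(1,2) max_matching_is_matching max_matching_finite by auto
  have "odd (length xs - 1) \<longrightarrow> \<not> covered N (last xs)" using assms(4) by blast
  then have "is_matching F (switch N xs)" "card (switch N xs) = card N"
    using switch_is_matching[OF m(1) assms(3)] card_switch[OF m(1) assms(3) m(2)] assms(4)
    by simp_all
  then show "max_matching F (switch N xs)" using assms(2) unfolding max_matching_def by simp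
  show "\<not> covered (switch N xs) (last xs)" using switch_uncovers_last[OF m(1) assms(3,4)] .
qed

lemma even_reach_max_independent:
  assumes "finite F" "max_matching F N" "max_matching F N'" "even_reach F N' v"
  shows "even_reach F N v"
proof -
  obtain xs where "alt_path F N' xs" "last xs = v" "even (length xs - 1)"
    using assms(4) by (auto simp: even_reach_def)
  then show ?thesis
    using even_reach_switch[OF assms(1,3)] free_in_max_imp_even_reach[OF assms(1,2)] by metis
qed

lemma odd_reach_of_adj:
  assumes m: "is_matching F' N" and e: "even_reach F N u" and a: "adj F u v"
  shows "odd_reach F N v"
proof -
  obtain xs where xs: "alt_path F N xs" "last xs = u" "even (length xs - 1)"
    using e by (auto simp: even_reach_def)
  define L where "L = length xs - 1"
  have L: "L < length xs" "xs ! L = u"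
    using xs by (auto simp: alt_path_def last_conv_nth L_def)
  show ?thesis
  proof (cases "v \<in> set xs")
    case True
    then obtain j where j: "j < length xs" "v = xs ! j" by (auto simp: in_set_conv_nth)
    have "odd j"
      using alt_path_is_Ap_parity[OF xs(1) j(1)] alt_path_is_Ap_parity[OF xs(1) L(1)]
        adj_is_Ap[OF a] L(2) j(2) xs(3) L_def by auto
    then show ?thesis using alt_path_reach_nth(2)[OF xs(1) j(1)] j(2) by simp
  next
    case False
    have "\<not> adj N u v"
    proof
      assume uv: "adj N u v"
      show False
      proof (cases L)
        case 0
        then show False using uv xs(1) L by (auto simp: alt_path_def covered_def hd_conv_nth)
      next
        case (Suc i)
        have "adj N (xs ! i) (xs ! L)" using alt_path_adj_iff[OF xs(1), of i] Suc L xs(3) L_def by simp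
        then have "xs ! i = v" using matching_adj_unique[OF m _ uv] L by simp
        then show False using False Suc L by (metis Suc_lessD nth_mem)
      qed
    qed
    then have "alt_path F N (xs @ [v])" using alt_path_snoc[OF xs(1) False] a xs(2,3) by simp
    moreover have "odd (length (xs @ [v]) - 1)" using xs(3) L(1) unfolding L_def by (simp only: length_append_singleton diff_Suc_1) presburger
    ultimately show ?thesis unfolding odd_reach_def by (intro exI[of _ "xs @ [v]"]) simp
  qed
qed

lemma odd_reach_max_independent:
  assumes fF: "finite F" and mN: "max_matching F N" and mN': "max_matching F N'"
    and o: "odd_reach F N' v"
  shows "odd_reach F N v"
proof -
  obtain xs where xs: "alt_path F N' xs" "last xs = v" "odd (length xs - 1)"
    using o by (auto simp: odd_reach_def)
  then obtain i where i: "length xs - 1 = Suc i" by (metis odd_pos not0_implies_Suc neq0_conv)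
  then have i': "Suc i < length xs" "xs ! Suc i = v" "even i"
    using xs by (auto simp: alt_path_def last_conv_nth)
  have "even_reach F N (xs ! i)"
    using alt_path_reach_nth(1)[OF xs(1)] i' even_reach_max_independent[OF fF mN mN'] by simp
  moreover have "adj F (xs ! i) v" using alt_path_adj[OF xs(1) i'(1)] i' by simp
  ultimately show ?thesis using odd_reach_of_adj[OF max_matching_is_matching[OF mN]] by blast
qed

lemma odd_reach_of_partner:
  assumes m: "is_matching F' N" and e: "even_reach F N u" and a: "adj N u w"
  shows "odd_reach F N w"
proof -
  obtain xs where xs: "alt_path F N xs" "last xs = u" "even (length xs - 1)"
    using e by (auto simp: even_reach_def)
  define L where "L = length xs - 1"
  have L: "L < length xs" "xs ! L = u"
    using xs by (auto simp: alt_path_def last_conv_nth L_def)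
  show ?thesis
  proof (cases L)
    case 0
    then show ?thesis using a xs(1) L by (auto simp: alt_path_def covered_def hd_conv_nth)
  next
    case (Suc i)
    have "adj N (xs ! i) (xs ! L)" using alt_path_adj_iff[OF xs(1), of i] Suc L xs(3) L_def by simp
    then have "xs ! i = w" using matching_adj_unique[OF m _ a] L by simp
    moreover have "odd i" using Suc xs(3) L_def by simp
    ultimately show ?thesis using alt_path_reach_nth(2)[OF xs(1), of i] Suc L by simp
  qed
qed

lemma even_reach_of_partner:
  assumes m: "is_matching F N" and o: "odd_reach F N u" and a: "adj N u w"
  shows "even_reach F N w"
proof -
  obtain xs where xs: "alt_path F N xs" "last xs = u" "odd (length xs - 1)"
    using o by (auto simp: odd_reach_def)
  define L where "L = length xs - 1"
  have L: "L < length xs" "xs ! L = u"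
    using xs by (auto simp: alt_path_def last_conv_nth L_def)
  have "w \<notin> set xs"
  proof
    assume "w \<in> set xs"
    then obtain j where j: "j < length xs" "w = xs ! j" by (auto simp: in_set_conv_nth)
    have "even j"
      using alt_path_is_Ap_parity[OF xs(1) j(1)] alt_path_is_Ap_parity[OF xs(1) L(1)]
        adj_is_Ap[OF a] L(2) j(2) xs(3) L_def by auto
    show False
    proof (cases j)
      case 0
      then have "covered N (hd xs)" using a j xs(1) adj_sym unfolding covered_def
        by (metis alt_path_def hd_conv_nth)
      then show False using xs(1) by (simp add: alt_path_def)
    next
      case (Suc i)
      then have "adj N (xs ! i) (xs ! j)"
        using alt_path_adj_iff[OF xs(1), of i] j(1) \<open>even j\<close> by simp
      then have "xs ! i = xs ! L" using matching_adj_unique[OF m _ adj_sym[OF a]] j(2) L by simp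
      then show False
        using nth_eq_iff_index_eq xs(1) L(1) Suc j(1) L_def by (fastforce simp: alt_path_def)
    qed
  qed
  moreover have "adj F u w" using a m adj_mono unfolding is_matching_def by blast
  ultimately have "alt_path F N (xs @ [w])" using alt_path_snoc[OF xs(1)] a xs(2,3) by simp
  moreover have "even (length (xs @ [w]) - 1)" using xs(3) L(1) unfolding L_def by (simp only: length_append_singleton diff_Suc_1) presburger
  ultimately show ?thesis unfolding even_reach_def by (intro exI[of _ "xs @ [w]"]) simp
qed

lemma not_even_and_odd_reach:
  assumes fF: "finite F" and mN: "max_matching F N" and "even_reach F N v" "odd_reach F N v"
  shows False
proof -
  obtain xs where xs: "alt_path F N xs" "last xs = v" "even (length xs - 1)"
    using assms(3) by (auto simp: even_reach_def)
  note N' = even_reach_switch[OF fF mN xs(1,3)]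
  have "odd_reach F (switch N xs) v" using odd_reach_max_independent[OF fF N'(1) mN assms(4)] .
  then obtain ys where ys: "alt_path F (switch N xs) ys" "last ys = v" "odd (length ys - 1)"
    by (auto simp: odd_reach_def)
  then show False
    using augmenting_path_not_max N' xs(2) max_matching_is_matching max_matching_finite[OF fF]
    by metis
qed

lemma even_vs_iff:
  "finite F \<Longrightarrow> max_matching F N \<Longrightarrow> v \<in> even_vs V F \<longleftrightarrow> v \<in> V \<and> even_reach F N v"
  using even_reach_max_independent unfolding even_vs_def even_reach_def by blast

lemma odd_vs_iff:
  "finite F \<Longrightarrow> max_matching F N \<Longrightarrow> v \<in> odd_vs V F \<longleftrightarrow> v \<in> V \<and> odd_reach F N v"
  using odd_reach_max_independent unfolding odd_vs_def odd_reach_def by blast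

definition edges_within :: "('a, 'q) vert set \<Rightarrow> ('a \<times> 'q) set \<Rightarrow> bool" where
  "edges_within V F \<longleftrightarrow> (\<forall>a q. (a, q) \<in> F \<longrightarrow> Ap a \<in> V \<and> Po q \<in> V)"

locale gallai_edmonds =
  fixes V :: "('a, 'q) vert set" and F N :: "('a \<times> 'q) set"
  assumes finite_F: "finite F" and max: "max_matching F N" and within: "edges_within V F"
begin

abbreviation "Ev \<equiv> even_vs V F"
abbreviation "Ov \<equiv> odd_vs V F"
abbreviation "Uv \<equiv> unr_vs V F"

lemma matching: "is_matching F N"
  using max max_matching_is_matching by blast

lemma even_iff: "v \<in> Ev \<longleftrightarrow> v \<in> V \<and> even_reach F N v"
  using even_vs_iff[OF finite_F max] .

lemma odd_iff: "v \<in> Ov \<longleftrightarrow> v \<in> V \<and> odd_reach F N v"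
  using odd_vs_iff[OF finite_F max] .

lemma unr_iff: "v \<in> Uv \<longleftrightarrow> v \<in> V \<and> v \<notin> Ev \<and> v \<notin> Ov"
  by (auto simp: unr_vs_def)

lemma even_not_odd: "v \<in> Ev \<Longrightarrow> v \<notin> Ov"
  using even_iff odd_iff not_even_and_odd_reach[OF finite_F max] by blast

lemma free_even: "v \<in> V \<Longrightarrow> \<not> covered N v \<Longrightarrow> v \<in> Ev"
  using even_iff even_reach_free by blast

lemma odd_unr_covered: "v \<in> Ov \<union> Uv \<Longrightarrow> covered N v"
  using free_even even_not_odd unfolding odd_vs_def unr_vs_def by blast

lemma edge_in_V: "(a, q) \<in> F \<Longrightarrow> Ap a \<in> V \<and> Po q \<in> V"
  using within by (simp add: edges_within_def)

lemma edge_even_odd: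
  assumes "(a, q) \<in> F"
  shows "Ap a \<in> Ev \<Longrightarrow> Po q \<in> Ov" "Po q \<in> Ev \<Longrightarrow> Ap a \<in> Ov"
proof -
  have "adj F (Ap a) (Po q)" "adj F (Po q) (Ap a)" using assms by (auto simp: adj_def)
  then show "Ap a \<in> Ev \<Longrightarrow> Po q \<in> Ov" "Po q \<in> Ev \<Longrightarrow> Ap a \<in> Ov"
    using odd_reach_of_adj[OF matching] edge_in_V[OF assms] even_iff odd_iff by blast+
qed

lemma matched_classes:
  assumes "(a, q) \<in> N"
  shows "Ap a \<in> Ev \<longleftrightarrow> Po q \<in> Ov" "Po q \<in> Ev \<longleftrightarrow> Ap a \<in> Ov" "Ap a \<in> Uv \<longleftrightarrow> Po q \<in> Uv"
proof -
  have V: "Ap a \<in> V" "Po q \<in> V" using assms matching edge_in_V by (auto simp: is_matching_def)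
  have adj: "adj N (Ap a) (Po q)" "adj N (Po q) (Ap a)" using assms by (auto simp: adj_def)
  have "Ap a \<in> Ev \<Longrightarrow> Po q \<in> Ov" "Po q \<in> Ev \<Longrightarrow> Ap a \<in> Ov"
    using odd_reach_of_partner[OF matching] adj even_iff odd_iff V by blast+
  moreover have "Ap a \<in> Ov \<Longrightarrow> Po q \<in> Ev" "Po q \<in> Ov \<Longrightarrow> Ap a \<in> Ev"
    using even_reach_of_partner[OF matching] adj even_iff odd_iff V by blast+
  ultimately show "Ap a \<in> Ev \<longleftrightarrow> Po q \<in> Ov" "Po q \<in> Ev \<longleftrightarrow> Ap a \<in> Ov"
    "Ap a \<in> Uv \<longleftrightarrow> Po q \<in> Uv"
    using unr_iff V by blast+
qed

lemma matched_not_joins_OU: "e \<in> N \<Longrightarrow> \<not> joins_OU e Ov Uv"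
  using matched_classes[of "fst e" "snd e"] even_not_odd unr_iff
  unfolding joins_OU_def by auto

lemma edge_classes:
  assumes "(a, q) \<in> F" "\<not> joins_OU (a, q) Ov Uv"
  shows "(Ap a \<in> Ov \<and> Po q \<in> Ev) \<or> (Po q \<in> Ov \<and> Ap a \<in> Ev) \<or> (Ap a \<in> Uv \<and> Po q \<in> Uv)"
  using edge_even_odd[OF assms(1)] edge_in_V[OF assms(1)] assms(2) unr_iff even_not_odd
  unfolding joins_OU_def by auto

text \<open>A matching without O-O and O-U edges that covers O \<union> U is at least as large as N:
  charge each N-edge to an end in O \<union> U (its applicant if possible) and that end to the
  edge of K covering it.\<close>

definition charged_end :: "'a \<times> 'q \<Rightarrow> ('a, 'q) vert" where
  "charged_end e = (if Ap (fst e) \<in> Ov \<union> Uv then Ap (fst e) else Po (snd e))"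

lemma charged_end_odd_unr:
  assumes e: "e \<in> N"
  shows "charged_end e \<in> Ov \<union> Uv" "has_end e (charged_end e)"
    "charged_end e = Po q \<Longrightarrow> Po q \<in> Ov"
proof -
  have "Po (snd e) \<in> Ov" if "Ap (fst e) \<notin> Ov \<union> Uv"
  proof -
    have "Ap (fst e) \<in> Ev"
      using that e matching edge_in_V[of "fst e" "snd e"] unr_iff by (auto simp: is_matching_def)
    then show ?thesis using matched_classes(1)[of "fst e" "snd e"] e by simp
  qed
  then show "charged_end e \<in> Ov \<union> Uv" "has_end e (charged_end e)"
    "charged_end e = Po q \<Longrightarrow> Po q \<in> Ov"
    by (auto simp: charged_end_def has_end_def split: if_splits)
qed

lemma charged_ends_not_adjacent:
  assumes "(a, q) \<in> F" "\<not> joins_OU (a, q) Ov Uv" "e1 \<in> N" "e2 \<in> N"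
    and "charged_end e1 = Ap a" "charged_end e2 = Po q"
  shows False
proof -
  have "Ap a \<in> Ov \<union> Uv" "Po q \<in> Ov \<union> Uv" using charged_end_odd_unr(1) assms(3-6) by metis+
  then have "Ap a \<notin> Ev" "Po q \<notin> Ev" using even_not_odd unr_iff by blast+
  then have "Po q \<in> Uv" using edge_classes[OF assms(1,2)] by blast
  then show False using charged_end_odd_unr(3)[OF assms(4,6)] unr_iff by blast
qed

lemma card_le_if_covers_odd_unr:
  assumes mK: "is_matching F K" and nj: "\<forall>e\<in>K. \<not> joins_OU e Ov Uv"
    and cv: "\<forall>v \<in> Ov \<union> Uv. covered K v"
  shows "card N \<le> card K"
proof -
  have fK: "finite K" using mK finite_F finite_subset unfolding is_matching_def by blast
  define g where "g e = (SOME f. f \<in> K \<and> has_end f (charged_end e))" for e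
  have gK: "g e \<in> K \<and> has_end (g e) (charged_end e)" if "e \<in> N" for e
  proof -
    have "\<exists>f. f \<in> K \<and> has_end f (charged_end e)"
      using cv charged_end_odd_unr[OF that] covered_iff_has_end by blast
    then show ?thesis unfolding g_def by (rule someI_ex)
  qed
  have "inj_on g N"
  proof (rule inj_onI)
    fix e1 e2 assume e: "e1 \<in> N" "e2 \<in> N" "g e1 = g e2"
    show "e1 = e2"
    proof (cases "charged_end e1 = charged_end e2")
      case True
      then show ?thesis
        using matching_has_end_unique[OF matching e(1,2)] charged_end_odd_unr(2) e by metis
    next
      case False
      obtain a q where f: "g e1 = (a, q)" by fastforce
      have "(a, q) \<in> K" using gK[OF e(1)] f by simp
      then have "(a, q) \<in> F" "\<not> joins_OU (a, q) Ov Uv" using mK nj by (auto simp: is_matching_def)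
      moreover have "charged_end e1 = Ap a \<or> charged_end e1 = Po q"
        "charged_end e2 = Ap a \<or> charged_end e2 = Po q"
        using gK[OF e(1)] gK[OF e(2)] f e(3)[symmetric] by (simp_all add: has_end_def)
      ultimately show ?thesis using charged_ends_not_adjacent e(1,2) False by metis
    qed
  qed
  moreover have "g ` N \<subseteq> K" using gK by blast
  ultimately show ?thesis using card_inj_on_le fK by blast
qed

end


section \<open>Irving et al.'s reduction on a rank-maximal instance\<close>

lemma lexord_less_nth:
  assumes "length xs = length ys" "t < length xs" "\<forall>s<t. xs ! s = ys ! s" "xs ! t < (ys ! t :: nat)"
  shows "(xs, ys) \<in> lexord {(x, y). x < y}"
proof -
  have "take t xs = take t ys" using assms by (simp add: list_eq_iff_nth_eq)
  then show ?thesis using assms unfolding lexord_take_index_conv by auto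
qed

locale rank_maximal_instance =
  fixes A :: "'a set" and P :: "'p set" and E :: "('a \<times> 'p) set"
    and rank :: "'a \<Rightarrow> 'p \<Rightarrow> nat" and r :: nat
    and M :: "('a \<times> ('p + 'a)) set"
  assumes inst: "rm_instance A P E rank r"
    and rm: "rank_maximal A E rank r M"
begin

abbreviation "X \<equiv> xedges A E"
abbreviation "V \<equiv> verts A P"
abbreviation "G i \<equiv> Gp A P E rank r i"
abbreviation "Ec i \<equiv> Ecl A P E rank r i"
abbreviation "Oc i \<equiv> Ocl A P E rank r i"
abbreviation "Uc i \<equiv> Ucl A P E rank r i"
abbreviation "RED \<equiv> reduced A P E rank r"
abbreviation "REL \<equiv> undirected_rel A P E rank r M"

definition rk :: "'a \<times> ('p + 'a) \<Rightarrow> nat" where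
  "rk e = case_prod (xrank rank r) e"

definition OU :: "nat \<Rightarrow> ('a, 'p + 'a) vert set" where
  "OU i = Oc i \<union> Uc i"

definition deleted_at :: "'a \<times> ('p + 'a) \<Rightarrow> nat \<Rightarrow> bool" where
  "deleted_at e i \<longleftrightarrow> joins_OU e (Oc i) (Uc i)"

lemma finite_A: "finite A" and finite_P: "finite P" and E_subset: "E \<subseteq> A \<times> P"
  and rank_bounds: "(a, p) \<in> E \<Longrightarrow> 1 \<le> rank a p \<and> rank a p \<le> r"
  using inst unfolding rm_instance_def by auto

lemma finite_X: "finite X"
proof -
  have "X \<subseteq> A \<times> (Inl ` P \<union> Inr ` A)" using E_subset unfolding xedges_def by auto
  then show ?thesis using finite_A finite_P finite_subset by blast
qed

lemma X_rk_bounds: "e \<in> X \<Longrightarrow> 1 \<le> rk e \<and> rk e \<le> r + 1"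
  unfolding xedges_def rk_def xrank_def by (fastforce dest: rank_bounds)

lemma X_mem: "(a, q) \<in> X \<Longrightarrow> a \<in> A \<and> q \<in> posts A P"
  unfolding xedges_def posts_def using E_subset by auto

lemma edges_within_X: "F \<subseteq> X \<Longrightarrow> edges_within V F"
  unfolding edges_within_def verts_def using X_mem by blast

lemma Ap_in_V: "Ap a \<in> V \<longleftrightarrow> a \<in> A"
  unfolding verts_def by auto

lemma Po_in_V: "Po q \<in> V \<longleftrightarrow> q \<in> posts A P"
  unfolding verts_def by auto

lemma irv_pending: "snd (irv V X (xrank rank r) k) =
    {e \<in> X. Suc k < rk e \<and> (\<forall>j. 1 \<le> j \<and> j \<le> k \<longrightarrow> \<not> incident e (OU j))}"
proof (induction k)
  case (Suc k)
  have "fst (irv V X (xrank rank r) k) = G (Suc k)" by (simp add: Gp_def)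
  then show ?case
    unfolding irv.simps Let_def Suc by (auto simp: OU_def Ocl_def Ucl_def rk_def le_Suc_eq)
qed (auto simp: rk_def)

lemma irv_graph: "fst (irv V X (xrank rank r) k) =
    {e \<in> X. rk e \<le> Suc k \<and> (\<forall>j. 1 \<le> j \<and> j < rk e \<longrightarrow> \<not> incident e (OU j))
       \<and> (\<forall>j. rk e \<le> j \<and> j \<le> k \<longrightarrow> \<not> deleted_at e j)}"
proof (induction k)
  case 0
  show ?case using X_rk_bounds by (force simp: rk_def)
next
  case (Suc k)
  have step: "e \<in> fst (irv V X (xrank rank r) (Suc k)) \<longleftrightarrow>
      (e \<in> G (Suc k) \<and> \<not> deleted_at e (Suc k)) \<or>
      (e \<in> snd (irv V X (xrank rank r) k) \<and> \<not> incident e (OU (Suc k)) \<and> rk e = Suc (Suc k))"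
    for e by (simp add: Let_def Gp_def deleted_at_def OU_def Ocl_def Ucl_def rk_def)
  have G: "G (Suc k) = fst (irv V X (xrank rank r) k)" by (simp add: Gp_def)
  show ?case
    unfolding set_eq_iff step G Suc irv_pending
    by (auto simp: le_Suc_eq less_Suc_eq_le)
qed

lemma Gp_iff:
  assumes "1 \<le> i"
  shows "e \<in> G i \<longleftrightarrow> e \<in> X \<and> rk e \<le> i \<and> (\<forall>j. 1 \<le> j \<and> j < rk e \<longrightarrow> \<not> incident e (OU j))
    \<and> (\<forall>j. rk e \<le> j \<and> j < i \<longrightarrow> \<not> deleted_at e j)"
proof -
  obtain k where k: "i = Suc k" using assms by (cases i) auto
  then show ?thesis unfolding Gp_def irv_graph by (auto simp: less_Suc_eq_le)
qed

lemma Gp_subset_X: "1 \<le> i \<Longrightarrow> G i \<subseteq> X"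
  using Gp_iff by blast

lemma finite_Gp: "1 \<le> i \<Longrightarrow> finite (G i)"
  using Gp_subset_X finite_X finite_subset by blast

lemma Gp_rk_le: "1 \<le> i \<Longrightarrow> e \<in> G i \<Longrightarrow> rk e \<le> i"
  using Gp_iff by blast

lemma Gp_antimono: "1 \<le> j \<Longrightarrow> j \<le> i \<Longrightarrow> e \<in> G i \<Longrightarrow> rk e \<le> j \<Longrightarrow> e \<in> G j"
  using Gp_iff[of i e] Gp_iff[of j e] by auto

lemma Gp_not_deleted: "e \<in> G i \<Longrightarrow> rk e \<le> j \<Longrightarrow> j < i \<Longrightarrow> \<not> deleted_at e j"
  using Gp_iff[of i e] by auto

lemma Gp_not_incident: "1 \<le> i \<Longrightarrow> e \<in> G i \<Longrightarrow> 1 \<le> j \<Longrightarrow> j < rk e \<Longrightarrow> \<not> incident e (OU j)"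
  using Gp_iff by blast

lemma reduced_eq: "RED = G (r + 1) - {e. deleted_at e (r + 1)}"
  by (simp add: reduced_def deleted_at_def)

lemma reduced_subset_X: "RED \<subseteq> X"
  using reduced_eq Gp_subset_X by auto

lemma reduced_in_Gp:
  assumes "e \<in> RED" "1 \<le> j" "j \<le> r + 1" "rk e \<le> j"
  shows "e \<in> G j \<and> \<not> deleted_at e j"
proof -
  have "e \<in> G (r + 1)" "\<not> deleted_at e (r + 1)" using assms(1) reduced_eq by auto
  then show ?thesis using assms Gp_antimono Gp_not_deleted by (cases "j = r + 1") auto
qed

lemma reduced_not_incident: "e \<in> RED \<Longrightarrow> 1 \<le> j \<Longrightarrow> j < rk e \<Longrightarrow> \<not> incident e (OU j)"
  using reduced_eq Gp_not_incident[of "r + 1" e j] by auto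

lemma gallai_edmonds_Gp: "1 \<le> i \<Longrightarrow> max_matching (G i) N \<Longrightarrow> gallai_edmonds V (G i) N"
  unfolding gallai_edmonds_def using finite_Gp edges_within_X Gp_subset_X by blast

lemma OU_eq: "OU j = odd_vs V (G j) \<union> unr_vs V (G j)"
  by (simp add: OU_def Ocl_def Ucl_def)

lemma deleted_at_eq: "deleted_at e j \<longleftrightarrow> joins_OU e (odd_vs V (G j)) (unr_vs V (G j))"
  by (simp add: deleted_at_def Ocl_def Ucl_def)

lemma M_matching: "is_matching X M"
  using rm by (simp add: rank_maximal_def)

lemma M_subset_X: "M \<subseteq> X"
  using M_matching by (simp add: is_matching_def)

lemma finite_M: "finite M"
  using M_subset_X finite_X finite_subset by blast

definition M_upto :: "nat \<Rightarrow> ('a \<times> ('p + 'a)) set" where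
  "M_upto i = {e \<in> M. rk e \<le> i}"

definition count_upto :: "nat \<Rightarrow> ('a \<times> ('p + 'a)) set \<Rightarrow> nat" where
  "count_upto j S = card {e \<in> S. rk e \<le> j}"

lemma signature_length: "length (signature rank r S) = r + 1"
  by (simp add: signature_def)

lemma signature_nth: "t < r + 1 \<Longrightarrow> signature rank r S ! t = card {e \<in> S. rk e = Suc t}"
  by (simp add: signature_def rk_def nth_upt del: upt_Suc)

lemma count_upto_0:
  assumes "S \<subseteq> X"
  shows "count_upto 0 S = 0"
proof -
  have "{e \<in> S. rk e \<le> 0} = {}" using assms X_rk_bounds by fastforce
  then show ?thesis unfolding count_upto_def by (metis card.empty)
qed

lemma card_rk_eq:
  assumes "finite S" "1 \<le> j"
  shows "card {e \<in> S. rk e = j} = count_upto j S - count_upto (j - 1) S"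
    "count_upto (j - 1) S \<le> count_upto j S"
proof -
  have "{e \<in> S. rk e \<le> j} = {e \<in> S. rk e \<le> j - 1} \<union> {e \<in> S. rk e = j}"
    "{e \<in> S. rk e \<le> j - 1} \<inter> {e \<in> S. rk e = j} = {}"
    using assms(2) by auto
  then have "count_upto j S = count_upto (j - 1) S + card {e \<in> S. rk e = j}"
    unfolding count_upto_def using assms(1) by (simp add: card_Un_disjoint)
  then show "card {e \<in> S. rk e = j} = count_upto j S - count_upto (j - 1) S"
    "count_upto (j - 1) S \<le> count_upto j S" by simp_all
qed

lemma count_upto_rank_maximal:
  assumes mS: "is_matching X S" and i: "1 \<le> i" "i \<le> r + 1"
    and eq: "\<And>j. 1 \<le> j \<Longrightarrow> j < i \<Longrightarrow> count_upto j S = count_upto j M"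
  shows "count_upto i S \<le> count_upto i M"
proof (rule ccontr)
  assume lt: "\<not> count_upto i S \<le> count_upto i M"
  have SX: "S \<subseteq> X" and fS: "finite S"
    using mS finite_X finite_subset by (auto simp: is_matching_def)
  have eq': "count_upto j S = count_upto j M" if "j < i" for j
    using eq that count_upto_0[OF SX] count_upto_0[OF M_subset_X] by (cases "j = 0") auto
  have sig: "signature rank r T ! s = count_upto (Suc s) T - count_upto s T"
    if "finite T" "s < r + 1" for T s
    using signature_nth[OF that(2)] card_rk_eq(1)[OF that(1), of "Suc s"] by simp
  have "(signature rank r M, signature rank r S) \<in> lexord {(x, y). x < y}"
  proof (rule lexord_less_nth[where t = "i - 1"])
    show "\<forall>s<i - 1. signature rank r M ! s = signature rank r S ! s"
      using sig[OF finite_M] sig[OF fS] eq' i by simp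
    have "count_upto (i - 1) M \<le> count_upto i M" using card_rk_eq(2)[OF finite_M i(1)] .
    then show "signature rank r M ! (i - 1) < signature rank r S ! (i - 1)"
      using sig[OF finite_M, of "i - 1"] sig[OF fS, of "i - 1"] eq'[of "i - 1"] lt i by simp
  qed (use i in \<open>simp_all add: signature_length\<close>)
  then show False using rm mS unfolding rank_maximal_def by blast
qed

lemma count_upto_all: "(\<And>e. e \<in> S \<Longrightarrow> rk e \<le> j) \<Longrightarrow> count_upto j S = card S"
proof -
  assume "\<And>e. e \<in> S \<Longrightarrow> rk e \<le> j"
  then have "{e \<in> S. rk e \<le> j} = S" by blast
  then show ?thesis unfolding count_upto_def by (rule arg_cong)
qed

lemma count_upto_top: "S \<subseteq> X \<Longrightarrow> count_upto (r + 1) S = card S"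
  using X_rk_bounds by (intro count_upto_all) blast

lemma count_upto_M: "count_upto i M = card (M_upto i)"
  by (simp add: count_upto_def M_upto_def)

lemma count_upto_ge_if_covers:
  assumes j: "1 \<le> j" and maxj: "max_matching (G j) (M_upto j)" and mK: "is_matching X K"
    and low: "\<And>e. e \<in> K \<Longrightarrow> rk e \<le> j \<Longrightarrow> e \<in> G j \<and> \<not> deleted_at e j"
    and high: "\<And>e. e \<in> K \<Longrightarrow> j < rk e \<Longrightarrow> \<not> incident e (OU j)"
    and cover: "\<And>v. v \<in> OU j \<Longrightarrow> covered K v"
  shows "count_upto j M \<le> count_upto j K"
proof -
  define Kj where "Kj = {e \<in> K. rk e \<le> j}"
  have "Kj \<subseteq> K" "Kj \<subseteq> G j" using low unfolding Kj_def by auto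
  then have "is_matching (G j) Kj" using is_matching_mono[OF is_matching_subset[OF mK]] by blast
  moreover have "\<forall>e\<in>Kj. \<not> joins_OU e (odd_vs V (G j)) (unr_vs V (G j))"
    using low deleted_at_eq unfolding Kj_def by blast
  moreover have "\<forall>v \<in> odd_vs V (G j) \<union> unr_vs V (G j). covered Kj v"
  proof
    fix v assume v: "v \<in> odd_vs V (G j) \<union> unr_vs V (G j)"
    then obtain f where f: "f \<in> K" "has_end f v"
      using cover OU_eq covered_iff_has_end by metis
    then have "incident f (OU j)" using v OU_eq incident_iff_has_end by blast
    then have "f \<in> Kj" using high f(1) unfolding Kj_def by fastforce
    then show "covered Kj v" using f(2) covered_iff_has_end by blast
  qed
  ultimately have "card (M_upto j) \<le> card Kj"
    using gallai_edmonds.card_le_if_covers_odd_unr[OF gallai_edmonds_Gp[OF j maxj]] by blast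
  then show ?thesis by (simp add: count_upto_M) (simp add: count_upto_def Kj_def)
qed

lemma M_upto_subset_Gp:
  assumes i: "1 \<le> i" and below: "\<And>j. 1 \<le> j \<Longrightarrow> j < i \<Longrightarrow> max_matching (G j) (M_upto j)"
  shows "M_upto i \<subseteq> G i"
proof
  fix e assume e: "e \<in> M_upto i"
  have eM: "e \<in> M" and ri: "rk e \<le> i" using e by (auto simp: M_upto_def)
  have "\<not> incident e (OU j)" if j: "1 \<le> j" "j < rk e" for j
  proof
    assume "incident e (OU j)"
    then obtain v where v: "v \<in> OU j" "has_end e v" using incident_iff_has_end by blast
    have "j < i" using j ri by simp
    then have "covered (M_upto j) v"
      using gallai_edmonds.odd_unr_covered[OF gallai_edmonds_Gp[OF j(1) below[OF j(1)]]] v(1) OU_eq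
      by blast
    then obtain f where f: "f \<in> M_upto j" "has_end f v" using covered_iff_has_end by blast
    then have "e = f" using matching_has_end_unique[OF M_matching eM _ v(2)] by (simp add: M_upto_def)
    then show False using f(1) j by (simp add: M_upto_def)
  qed
  moreover have "\<not> deleted_at e j" if j: "rk e \<le> j" "j < i" for j
  proof -
    have j1: "1 \<le> j" using j X_rk_bounds[of e] M_subset_X eM by auto
    have "e \<in> M_upto j" using eM j by (simp add: M_upto_def)
    then show ?thesis
      using gallai_edmonds.matched_not_joins_OU[OF gallai_edmonds_Gp[OF j1 below[OF j1 j(2)]]]
        deleted_at_eq by blast
  qed
  ultimately show "e \<in> G i" using Gp_iff[OF i] M_subset_X eM ri by blast
qed

lemma count_upto_eq_below:
  assumes i: "1 \<le> i" and below: "\<And>j. 1 \<le> j \<Longrightarrow> j < i \<Longrightarrow> max_matching (G j) (M_upto j)"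
    and mK: "is_matching (G i) K" and cov: "\<And>v. covered (M_upto i) v \<Longrightarrow> covered K v"
    and j: "1 \<le> j" "j < i"
  shows "count_upto j K = count_upto j M"
proof -
  have KG: "K \<subseteq> G i" using mK by (simp add: is_matching_def)
  have Kj: "{e \<in> K. rk e \<le> j} \<subseteq> G j" using KG Gp_antimono[of j i] j by auto
  have "count_upto j M \<le> count_upto j K"
  proof (rule count_upto_ge_if_covers[OF j(1) below[OF j]])
    show "is_matching X K" using is_matching_mono[OF mK] KG Gp_subset_X[OF i] by blast
    show "e \<in> G j \<and> \<not> deleted_at e j" if "e \<in> K" "rk e \<le> j" for e
      using that Kj Gp_not_deleted KG j(2) by blast
    show "\<not> incident e (OU j)" if "e \<in> K" "j < rk e" for e
      using that Gp_not_incident[OF i] KG j(1) by blast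
    show "covered K v" if "v \<in> OU j" for v
    proof -
      have "covered (M_upto j) v"
        using gallai_edmonds.odd_unr_covered[OF gallai_edmonds_Gp[OF j(1) below[OF j]]] that OU_eq
        by blast
      moreover have "M_upto j \<subseteq> M_upto i" using j by (auto simp: M_upto_def)
      ultimately show ?thesis using cov covered_mono by blast
    qed
  qed
  moreover have "is_matching (G j) {e \<in> K. rk e \<le> j}"
    using is_matching_mono[OF is_matching_subset[OF mK] Kj] by blast
  then have "count_upto j K \<le> count_upto j M"
    using below[OF j] unfolding max_matching_def count_upto_def M_upto_def by blast
  ultimately show ?thesis by simp
qed

text \<open>Irving et al.'s invariant.  An augmenting path for M_upto i would give a matching
  that agrees with M below rank i and beats it at rank i.\<close>

theorem M_upto_max_matching: "1 \<le> i \<Longrightarrow> i \<le> r + 1 \<Longrightarrow> max_matching (G i) (M_upto i)"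
proof (induction i rule: less_induct)
  case (less i)
  have below: "max_matching (G j) (M_upto j)" if "1 \<le> j" "j < i" for j
    using less that by auto
  have "M_upto i \<subseteq> G i" using M_upto_subset_Gp[OF less.prems(1) below] by blast
  then have m: "is_matching (G i) (M_upto i)"
    using is_matching_mono[OF is_matching_subset[OF M_matching]] by (auto simp: M_upto_def)
  have "card K \<le> card (M_upto i)" if mK: "is_matching (G i) K" for K
  proof (rule ccontr)
    assume "\<not> card K \<le> card (M_upto i)"
    then obtain xs where xs: "alt_path (G i) (M_upto i) xs" "odd (length xs - 1)"
      "\<not> covered (M_upto i) (last xs)"
      using augmenting_path_exists[OF finite_Gp[OF less.prems(1)] m mK] by auto
    define N' where "N' = switch (M_upto i) xs"
    have mN': "is_matching (G i) N'" using switch_is_matching[OF m xs(1)] xs(3) N'_def by simp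
    have "(length xs - 1) mod 2 = 1" using xs(2) by presburger
    then have "card N' = card (M_upto i) + 1"
      using card_switch[OF m xs(1)] finite_M N'_def by (simp add: M_upto_def)
    moreover have "count_upto i N' = card N'"
      using mN' Gp_rk_le[OF less.prems(1)] by (intro count_upto_all) (auto simp: is_matching_def)
    moreover have "is_matching X N'"
      using is_matching_mono[OF mN'] mN' Gp_subset_X[OF less.prems(1)] by (auto simp: is_matching_def)
    then have "count_upto i N' \<le> count_upto i M"
      using count_upto_rank_maximal less.prems count_upto_eq_below[OF less.prems(1) below mN']
        covered_switch[OF m xs(1,2)] N'_def by blast
    ultimately show False using count_upto_M by simp
  qed
  then show ?case using m unfolding max_matching_def by blast
qed

lemma M_upto_top: "M_upto (r + 1) = M"
  using M_subset_X X_rk_bounds unfolding M_upto_def by blast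

lemma M_max_matching: "max_matching (G (r + 1)) M"
  using M_upto_max_matching[of "r + 1"] M_upto_top by simp

lemma gallai_edmonds_M: "gallai_edmonds V (G (r + 1)) M"
  using gallai_edmonds_Gp M_max_matching by simp

lemma M_subset_reduced: "M \<subseteq> RED"
proof
  fix e assume e: "e \<in> M"
  then have "\<not> deleted_at e (r + 1)"
    using gallai_edmonds.matched_not_joins_OU[OF gallai_edmonds_M] deleted_at_eq by blast
  moreover have "e \<in> G (r + 1)"
    using M_max_matching e by (auto simp: max_matching_def is_matching_def)
  ultimately show "e \<in> RED" using reduced_eq by simp
qed

text \<open>Matching an unmatched applicant to its last-resort post would improve the signature.\<close>

lemma applicant_matched:
  assumes a: "a \<in> A"
  shows "\<exists>q. (a, q) \<in> M"
proof (rule ccontr)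
  assume free: "\<nexists>q. (a, q) \<in> M"
  define M' where "M' = insert (a, Inr a) M"
  have "(a', Inr a) \<notin> M" for a'
    using free M_subset_X unfolding xedges_def by blast
  then have mM': "is_matching X M'"
    using M_matching a free unfolding is_matching_def M'_def xedges_def by auto
  have new: "(a, Inr a) \<notin> M" "rk (a, Inr a) = r + 1"
    using free by (auto simp: rk_def xrank_def)
  have "count_upto (r + 1) M' = count_upto (r + 1) M + 1"
    using count_upto_top[OF M_subset_X] count_upto_top mM' finite_M new(1)
    unfolding is_matching_def M'_def by simp
  moreover have "count_upto j M' = count_upto j M" if "j < r + 1" for j
  proof -
    have "{e \<in> M'. rk e \<le> j} = {e \<in> M. rk e \<le> j}" using that new(2) unfolding M'_def by auto
    then show ?thesis unfolding count_upto_def by (rule arg_cong)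
  qed
  ultimately show False using count_upto_rank_maximal[OF mM', of "r + 1"] by fastforce
qed

lemma fst_M: "fst ` M = A"
  using M_subset_X X_mem applicant_matched by force

lemma max_matching_covers_applicants:
  assumes K: "max_matching (G (r + 1)) K" and a: "a \<in> A"
  shows "covered K (Ap a)"
proof -
  have mK: "is_matching (G (r + 1)) K" using K max_matching_is_matching by blast
  have injK: "inj_on fst K" and injM: "inj_on fst M"
    using mK M_matching unfolding is_matching_iff_inj by blast+
  have "card (fst ` K) = card K" using injK by (rule card_image)
  also have "\<dots> = card M" using K M_max_matching unfolding max_matching_def by (simp add: le_antisym)
  also have "\<dots> = card A" using card_image[OF injM] fst_M by simp
  finally have "card (fst ` K) = card A" .
  moreover have "fst ` K \<subseteq> A"
  proof
    fix a assume "a \<in> fst ` K"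
    then obtain q where "(a, q) \<in> K" by force
    then show "a \<in> A" using mK Gp_subset_X[of "r + 1"] X_mem by (auto simp: is_matching_def)
  qed
  ultimately have "fst ` K = A" using card_subset_eq[OF finite_A] by blast
  then obtain e where "e \<in> K" "fst e = a" using a by force
  then show ?thesis unfolding covered_iff_has_end has_end_def by blast
qed

lemma alt_path_is_Ap_last:
  assumes "alt_path F N xs"
  shows "is_Ap (last xs) = (is_Ap (hd xs) = even (length xs - 1))"
proof -
  have "xs \<noteq> []" using assms by (simp add: alt_path_def)
  then show ?thesis using alt_path_is_Ap_parity[OF assms, of "length xs - 1"]
    by (simp add: last_conv_nth hd_conv_nth)
qed

lemma alt_path_starts_at_post:
  assumes xs: "alt_path (G (r + 1)) M xs" and last: "last xs \<in> V"
  shows "\<not> is_Ap (hd xs)"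
proof
  assume "is_Ap (hd xs)"
  then obtain a where a: "hd xs = Ap a" by (cases "hd xs") auto
  have "a \<in> A"
  proof (cases "Suc 0 < length xs")
    case True
    moreover have "hd xs = xs ! 0" using xs by (simp add: alt_path_def hd_conv_nth)
    ultimately have "adj (G (r + 1)) (Ap a) (xs ! Suc 0)" using alt_path_adj[OF xs] a by simp
    then obtain q where "(a, q) \<in> G (r + 1)" by (auto simp: adj_def)
    then show ?thesis using Gp_subset_X[of "r + 1"] X_mem by auto
  next
    case False
    then have "last xs = hd xs" using xs by (cases xs) (auto simp: alt_path_def)
    then show ?thesis using last a Ap_in_V by simp
  qed
  then have "covered M (hd xs)" using a max_matching_covers_applicants[OF M_max_matching] by simp
  then show False using xs by (simp add: alt_path_def)
qed

lemma applicant_not_even: "Ap a \<notin> Ec (r + 1)"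
proof
  assume "Ap a \<in> Ec (r + 1)"
  then obtain xs where "alt_path (G (r + 1)) M xs" "last xs = Ap a" "even (length xs - 1)" "Ap a \<in> V"
    using gallai_edmonds.even_iff[OF gallai_edmonds_M] by (auto simp: Ecl_def even_reach_def)
  then show False using alt_path_starts_at_post alt_path_is_Ap_last by fastforce
qed

lemma post_not_odd: "Po p \<notin> Oc (r + 1)"
proof
  assume "Po p \<in> Oc (r + 1)"
  then obtain xs where "alt_path (G (r + 1)) M xs" "last xs = Po p" "odd (length xs - 1)" "Po p \<in> V"
    using gallai_edmonds.odd_iff[OF gallai_edmonds_M] by (auto simp: Ocl_def odd_reach_def)
  then show False using alt_path_starts_at_post alt_path_is_Ap_last by fastforce
qed

section \<open>The switching graph\<close>

lemma unmatched_post_even: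
  assumes p: "p \<in> posts A P" and free: "\<nexists>a. (a, p) \<in> M" and i: "i \<in> {1..r + 1}"
  shows "Po p \<in> Ec i"
proof -
  have "\<not> covered (M_upto i) (Po p)"
    using free unfolding covered_iff_has_end has_end_def M_upto_def by (auto simp: prod_eq_iff)
  then show ?thesis
    using gallai_edmonds.free_even[OF gallai_edmonds_Gp[OF _ M_upto_max_matching]] i p Po_in_V
    by (simp add: Ecl_def)
qed

lemma unmatched_post_sink:
  assumes "p \<in> posts A P" "\<nexists>a. (a, p) \<in> M"
  shows "is_sink A P E rank r M p"
  using assms unmatched_post_even unfolding is_sink_def sw_edge_def by blast

lemma even_post_not_deleted: "Po y \<in> Ec (r + 1) \<Longrightarrow> \<not> deleted_at (b, y) (r + 1)"
  using gallai_edmonds.even_not_odd[OF gallai_edmonds_M]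
  unfolding deleted_at_def joins_OU_def Ecl_def Ocl_def Ucl_def unr_vs_def by auto

text \<open>Two steps back along an even alternating path from a matched post: the matched applicant
  and the even post before it give a switching edge.\<close>

lemma alt_path_switching_edge:
  assumes xs: "alt_path (G (r + 1)) M xs" and t: "Suc (Suc t) < length xs" "even t"
    and q: "xs ! Suc (Suc t) = Po q"
  shows "\<exists>q'. xs ! t = Po q' \<and> Po q' \<in> Ec (r + 1) \<and> sw_edge RED M q q'"
proof -
  have "adj M (xs ! Suc t) (Po q)" using alt_path_adj_iff[OF xs t(1)] t(2) q by simp
  then obtain b where b: "xs ! Suc t = Ap b" "(b, q) \<in> M" by (auto simp: adj_def)
  have "adj (G (r + 1)) (xs ! t) (xs ! Suc t)" using alt_path_adj[OF xs] t(1) by simp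
  then obtain q' where q': "xs ! t = Po q'" "(b, q') \<in> G (r + 1)" using b by (auto simp: adj_def)
  have "Po q' \<in> V" using q'(2) Gp_subset_X[of "r + 1"] X_mem Po_in_V by auto
  then have even: "Po q' \<in> Ec (r + 1)"
    using alt_path_reach_nth(1)[OF xs, of t] t q'(1) gallai_edmonds.even_iff[OF gallai_edmonds_M]
    by (simp add: Ecl_def)
  then have "(b, q') \<in> RED" using even_post_not_deleted q'(2) reduced_eq by auto
  moreover have "q \<noteq> q'"
    using xs t q q'(1) nth_eq_iff_index_eq[of xs t "Suc (Suc t)"] by (auto simp: alt_path_def)
  ultimately show ?thesis using b(2) q'(1) even unfolding sw_edge_def by auto
qed

lemma sink_unmatched:
  assumes sink: "is_sink A P E rank r M q"
  shows "\<nexists>a. (a, q) \<in> M"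
proof
  assume "\<exists>a. (a, q) \<in> M"
  then have covered: "covered M (Po q)" unfolding covered_iff_has_end has_end_def by force
  have "Po q \<in> Ec (r + 1)" using sink unfolding is_sink_def by auto
  then obtain xs where xs: "alt_path (G (r + 1)) M xs" "last xs = Po q" "even (length xs - 1)"
    using gallai_edmonds.even_iff[OF gallai_edmonds_M] by (auto simp: Ecl_def even_reach_def)
  define L where "L = length xs - 1"
  have L: "L < length xs" "xs ! L = Po q"
    using xs by (auto simp: alt_path_def last_conv_nth L_def)
  have "L \<noteq> 0"
  proof
    assume "L = 0"
    then have "hd xs = Po q" using L xs(1) by (simp add: alt_path_def hd_conv_nth)
    then show False using xs(1) covered by (simp add: alt_path_def)
  qed
  then obtain t where t: "L = Suc (Suc t)" "even t"
    using xs(3) unfolding L_def[symmetric] by (metis even_Suc odd_one not0_implies_Suc One_nat_def)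
  then show False
    using alt_path_switching_edge[OF xs(1), of t q] L sink unfolding is_sink_def by auto
qed

lemma switching_edge_even_iff:
  assumes "sw_edge RED M x y"
  shows "Po x \<in> Ec (r + 1) \<longleftrightarrow> Po y \<in> Ec (r + 1)"
proof -
  obtain a where a: "(a, x) \<in> M" "(a, y) \<in> RED" using assms by (auto simp: sw_edge_def)
  have aG: "(a, y) \<in> G (r + 1)" and nj: "\<not> deleted_at (a, y) (r + 1)"
    using a(2) reduced_eq by auto
  have V: "Ap a \<in> V" using a(1) M_subset_X X_mem Ap_in_V by blast
  note mc = gallai_edmonds.matched_classes[OF gallai_edmonds_M a(1)]
  note ec = gallai_edmonds.edge_classes[OF gallai_edmonds_M aG nj[unfolded deleted_at_eq]]
  note even_not_odd = gallai_edmonds.even_not_odd[OF gallai_edmonds_M]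
  have nE: "Ap a \<notin> even_vs V (G (r + 1))" using applicant_not_even by (simp add: Ecl_def)
  show ?thesis
  proof (cases "Ap a \<in> odd_vs V (G (r + 1))")
    case True
    then have "Po x \<in> even_vs V (G (r + 1))" "Po y \<in> even_vs V (G (r + 1))"
      using mc(2) ec nE even_not_odd unfolding unr_vs_def by auto
    then show ?thesis by (simp add: Ecl_def)
  next
    case False
    then have "Ap a \<in> unr_vs V (G (r + 1))" using V nE unfolding unr_vs_def by auto
    then have "Po x \<notin> even_vs V (G (r + 1))" "Po y \<notin> even_vs V (G (r + 1))"
      using mc(2) ec nE False unfolding unr_vs_def by auto
    then show ?thesis by (simp add: Ecl_def)
  qed
qed

lemma alt_path_connects_to_start:
  assumes xs: "alt_path (G (r + 1)) M xs" "xs ! 0 = Po s0"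
  shows "2 * m < length xs \<Longrightarrow> xs ! (2 * m) = Po q \<Longrightarrow> (q, s0) \<in> REL\<^sup>*"
proof (induction m arbitrary: q)
  case (Suc m)
  then obtain q' where "xs ! (2 * m) = Po q'" "sw_edge RED M q q'"
    using alt_path_switching_edge[OF xs(1), of "2 * m" q] by auto
  moreover have "(q', s0) \<in> REL\<^sup>*" using Suc calculation(1) by simp
  ultimately show ?case unfolding undirected_rel_def by (auto intro: converse_rtrancl_into_rtrancl)
qed (use xs(2) in simp)

lemma even_post_reaches_free_post:
  assumes p: "p \<in> posts A P" and even: "Po p \<in> Ec (r + 1)"
  obtains s0 where "s0 \<in> posts A P" "\<nexists>a. (a, s0) \<in> M" "(p, s0) \<in> REL\<^sup>*"
proof -
  obtain xs where xs: "alt_path (G (r + 1)) M xs" "last xs = Po p" "even (length xs - 1)"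
    and "Po p \<in> V"
    using even gallai_edmonds.even_iff[OF gallai_edmonds_M] by (auto simp: Ecl_def even_reach_def)
  then have "\<not> is_Ap (hd xs)" using alt_path_starts_at_post by simp
  then obtain s0 where s0: "hd xs = Po s0" by (cases "hd xs") auto
  have hd: "xs ! 0 = Po s0" using s0 xs(1) by (simp add: alt_path_def hd_conv_nth)
  obtain m where m: "length xs - 1 = 2 * m" using xs(3) by (metis evenE)
  have "xs \<noteq> []" using xs(1) by (simp add: alt_path_def)
  then have last: "2 * m < length xs" "xs ! (2 * m) = Po p"
    using xs(2) m[symmetric] by (simp_all add: last_conv_nth)
  have "s0 \<in> posts A P"
  proof (cases "Suc 0 < length xs")
    case True
    then have "adj (G (r + 1)) (Po s0) (xs ! Suc 0)" using alt_path_adj[OF xs(1)] hd by force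
    then obtain b where "(b, s0) \<in> G (r + 1)" by (auto simp: adj_def)
    then show ?thesis using Gp_subset_X[of "r + 1"] X_mem by auto
  next
    case False
    then have "m = 0" using last(1) by simp
    then show ?thesis using last(2) hd p by simp
  qed
  moreover have "\<nexists>a. (a, s0) \<in> M"
    using xs(1) s0 unfolding alt_path_def covered_iff_has_end has_end_def by force
  moreover have "(p, s0) \<in> REL\<^sup>*" using alt_path_connects_to_start[OF xs(1) hd] last by simp
  ultimately show ?thesis using that by blast
qed

theorem in_sink_comp_iff:
  assumes p: "p \<in> posts A P"
  shows "in_sink_comp A P E rank r M p \<longleftrightarrow> Po p \<in> Ec (r + 1)"
proof
  assume "in_sink_comp A P E rank r M p"
  then obtain s where s: "is_sink A P E rank r M s" "(p, s) \<in> REL\<^sup>*"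
    unfolding in_sink_comp_def by blast
  from s(2) show "Po p \<in> Ec (r + 1)"
  proof (induction rule: converse_rtrancl_induct)
    case base
    then show ?case using s(1) unfolding is_sink_def by auto
  next
    case (step x y)
    then show ?case using switching_edge_even_iff unfolding undirected_rel_def by blast
  qed
next
  assume "Po p \<in> Ec (r + 1)"
  then obtain s0 where "s0 \<in> posts A P" "\<nexists>a. (a, s0) \<in> M" "(p, s0) \<in> REL\<^sup>*"
    using even_post_reaches_free_post[OF p] by blast
  then show "in_sink_comp A P E rank r M p"
    using unmatched_post_sink p unfolding in_sink_comp_def by blast
qed

theorem in_nonsink_comp_iff:
  assumes p: "p \<in> posts A P"
  shows "in_nonsink_comp A P E rank r M p \<longleftrightarrow> Po p \<in> Uc (r + 1)"
proof -
  have "in_nonsink_comp A P E rank r M p \<longleftrightarrow> Po p \<notin> Ec (r + 1)"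
    using in_sink_comp_iff[OF p] p unfolding in_nonsink_comp_def in_sink_comp_def by blast
  also have "\<dots> \<longleftrightarrow> Po p \<in> Uc (r + 1)"
    using post_not_odd[of p] Po_in_V[of p] p unfolding Ecl_def Ocl_def Ucl_def unr_vs_def by auto
  finally show ?thesis .
qed

section \<open>Weights of paths to sinks\<close>

text \<open>Along a path T to a sink, every applicant matched to a post of T moves one step forward;
  this yields a matching M_T of the reduced graph that leaves the first post of T free.\<close>

context
  fixes T :: "('p + 'a) list"
  assumes T: "dpath (posts A P) RED M T" and sink: "is_sink A P E rank r M (last T)"
begin

definition steps :: nat where
  "steps = length T - 1"

definition mover :: "nat \<Rightarrow> 'a" where
  "mover j = (THE a. (a, T ! j) \<in> M)"

definition old_edge :: "nat \<Rightarrow> 'a \<times> ('p + 'a)" where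
  "old_edge j = (mover j, T ! j)"

definition new_edge :: "nat \<Rightarrow> 'a \<times> ('p + 'a)" where
  "new_edge j = (mover j, T ! Suc j)"

definition M_T :: "('a \<times> ('p + 'a)) set" where
  "M_T = (M - old_edge ` {..<steps}) \<union> new_edge ` {..<steps}"

lemma steps_less: "steps < length T"
  using T by (simp add: dpath_def steps_def)

lemma T_nth_inj: "i < length T \<Longrightarrow> j < length T \<Longrightarrow> T ! i = T ! j \<Longrightarrow> i = j"
  using T nth_eq_iff_index_eq unfolding dpath_def by blast

lemma edges_along_T: "j < steps \<Longrightarrow> old_edge j \<in> M \<and> new_edge j \<in> RED"
proof -
  assume j: "j < steps"
  then have "sw_edge RED M (T ! j) (T ! Suc j)"
    using T unfolding dpath_def steps_def by simp
  then obtain a where a: "(a, T ! j) \<in> M" "(a, T ! Suc j) \<in> RED"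
    unfolding sw_edge_def by blast
  moreover have "mover j = a"
    unfolding mover_def using a(1) M_matching unfolding is_matching_def by blast
  ultimately show ?thesis by (simp add: old_edge_def new_edge_def)
qed

lemma last_T_unmatched: "\<nexists>a. (a, T ! steps) \<in> M"
  using sink_unmatched[OF sink] T by (simp add: dpath_def steps_def last_conv_nth)

lemma old_edge_inj: "inj_on old_edge {..<steps}"
  using T_nth_inj steps_less unfolding inj_on_def old_edge_def by auto

lemma new_edge_inj: "inj_on new_edge {..<steps}"
proof (rule inj_onI)
  fix i j assume "i \<in> {..<steps}" "j \<in> {..<steps}" "new_edge i = new_edge j"
  then show "i = j" using T_nth_inj[of "Suc i" "Suc j"] steps_less by (simp add: new_edge_def)
qed

lemma matched_post_mover: "j < steps \<Longrightarrow> (a, q) \<in> M \<Longrightarrow> a = mover j \<Longrightarrow> q = T ! j"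
  using edges_along_T M_matching unfolding is_matching_def old_edge_def by blast

lemma new_edge_notin_M: "j < steps \<Longrightarrow> new_edge j \<notin> M"
  using matched_post_mover[of j] T_nth_inj[of "Suc j" j] steps_less by (auto simp: new_edge_def)

lemma mover_inj: "inj_on mover {..<steps}"
proof (rule inj_onI)
  fix i j assume ij: "i \<in> {..<steps}" "j \<in> {..<steps}" and "mover i = mover j"
  then have "(mover j, T ! i) \<in> M" using edges_along_T[of i] by (simp add: old_edge_def)
  then have "T ! i = T ! j" using matched_post_mover[of j] ij by simp
  then show "i = j" using T_nth_inj steps_less ij by simp
qed

lemma matched_later_post_old_edge:
  assumes "(a, T ! Suc j) \<in> M" "j < steps"
  shows "(a, T ! Suc j) \<in> old_edge ` {..<steps}"
proof (cases "Suc j < steps")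
  case True
  then have "a = mover (Suc j)"
    using assms(1) edges_along_T M_matching unfolding old_edge_def is_matching_def by blast
  then show ?thesis using True unfolding old_edge_def by blast
next
  case False
  then have "Suc j = steps" using assms(2) by simp
  then show ?thesis using assms(1) last_T_unmatched by auto
qed

lemma M_T_matching: "is_matching RED M_T"
proof -
  let ?R = "M - old_edge ` {..<steps}" and ?N = "new_edge ` {..<steps}"
  have injM: "inj_on fst M" "inj_on snd M" using M_matching by (simp_all add: is_matching_iff_inj)
  have "inj_on fst ?N"
    using mover_inj[unfolded inj_on_def] unfolding inj_on_def new_edge_def by fastforce
  moreover have "fst ` ?R \<inter> fst ` ?N = {}"
    using matched_post_mover unfolding old_edge_def new_edge_def by fastforce
  moreover have "inj_on snd ?N"
  proof (rule inj_onI)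
    fix x y assume "x \<in> ?N" "y \<in> ?N" "snd x = snd y"
    then obtain i j where "i < steps" "j < steps" "x = new_edge i" "y = new_edge j"
      "T ! Suc i = T ! Suc j"
      by (auto simp: new_edge_def)
    then show "x = y" using T_nth_inj[of "Suc i" "Suc j"] steps_less by simp
  qed
  moreover have "snd ` ?R \<inter> snd ` ?N = {}"
    using matched_later_post_old_edge unfolding new_edge_def by fastforce
  moreover have "M_T \<subseteq> RED" using M_subset_reduced edges_along_T unfolding M_T_def by blast
  ultimately show ?thesis
    using injM inj_on_subset[of fst M ?R] inj_on_subset[of snd M ?R]
    unfolding is_matching_iff_inj M_T_def by (auto simp: inj_on_Un)
qed

lemma M_T_subset_reduced: "M_T \<subseteq> RED"
  using M_T_matching by (simp add: is_matching_def)

lemma M_T_head_free: "\<not> covered M_T (Po (T ! 0))"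
proof
  assume "covered M_T (Po (T ! 0))"
  then obtain f where "f \<in> M_T" "has_end f (Po (T ! 0))" using covered_iff_has_end by blast
  then obtain a where e: "(a, T ! 0) \<in> M_T" by (metis has_end_def prod.collapse vert.inject(2) vert.distinct(2))
  show False
  proof (cases "(a, T ! 0) \<in> M")
    case True
    have "0 < steps" using True last_T_unmatched by (metis gr0I)
    then have "a = mover 0"
      using True edges_along_T[of 0] M_matching unfolding old_edge_def is_matching_def by blast
    then have "(a, T ! 0) \<in> old_edge ` {..<steps}"
      using \<open>0 < steps\<close> unfolding old_edge_def by (intro image_eqI[of _ _ 0]) simp_all
    then have "(a, T ! 0) \<in> new_edge ` {..<steps}" using e unfolding M_T_def by blast
    then show False using True new_edge_notin_M by auto
  next
    case False
    then obtain j where "j < steps" "T ! 0 = T ! Suc j"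
      using e unfolding M_T_def new_edge_def by auto
    then show False using T_nth_inj[of 0 "Suc j"] steps_less by (cases T) auto
  qed
qed

definition old_count :: "nat \<Rightarrow> nat" where
  "old_count i = card {j. j < steps \<and> rk (old_edge j) \<le> i}"

definition new_count :: "nat \<Rightarrow> nat" where
  "new_count i = card {j. j < steps \<and> rk (new_edge j) \<le> i}"

lemma count_upto_split:
  "count_upto i M = count_upto i (M - old_edge ` {..<steps}) + old_count i"
  "count_upto i M_T = count_upto i (M - old_edge ` {..<steps}) + new_count i"
proof -
  let ?R = "{e \<in> M - old_edge ` {..<steps}. rk e \<le> i}"
  let ?O = "{j. j < steps \<and> rk (old_edge j) \<le> i}" and ?N = "{j. j < steps \<and> rk (new_edge j) \<le> i}"
  have fin: "finite ?R" using finite_M by simp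
  have "card (old_edge ` ?O) = old_count i"
    unfolding old_count_def by (rule card_image, rule inj_on_subset[OF old_edge_inj]) auto
  moreover have "{e \<in> M. rk e \<le> i} = ?R \<union> old_edge ` ?O" "?R \<inter> old_edge ` ?O = {}"
    using edges_along_T by blast+
  ultimately show "count_upto i M = count_upto i (M - old_edge ` {..<steps}) + old_count i"
    unfolding count_upto_def using card_Un_disjoint[OF fin] by simp
  have "card (new_edge ` ?N) = new_count i"
    unfolding new_count_def by (rule card_image, rule inj_on_subset[OF new_edge_inj]) auto
  moreover have "{e \<in> M_T. rk e \<le> i} = ?R \<union> new_edge ` ?N" unfolding M_T_def by auto
  moreover have "?R \<inter> new_edge ` ?N = {}" using new_edge_notin_M by blast
  ultimately show "count_upto i M_T = count_upto i (M - old_edge ` {..<steps}) + new_count i"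
    unfolding count_upto_def using card_Un_disjoint[OF fin] by simp
qed

lemma counts_top: "old_count (r + 1) = steps" "new_count (r + 1) = steps"
proof -
  have "rk (old_edge j) \<le> r + 1" "rk (new_edge j) \<le> r + 1" if "j < steps" for j
    using edges_along_T[OF that] M_subset_X reduced_subset_X X_rk_bounds by blast+
  then have "{j. j < steps \<and> rk (old_edge j) \<le> r + 1} = {..<steps}"
    "{j. j < steps \<and> rk (new_edge j) \<le> r + 1} = {..<steps}"
    by auto
  then show "old_count (r + 1) = steps" "new_count (r + 1) = steps"
    by (simp_all add: old_count_def new_count_def)
qed

lemma M_T_upto_matching:
  assumes "1 \<le> i" "i \<le> r + 1"
  shows "is_matching (G i) {e \<in> M_T. rk e \<le> i}"
proof -
  have "{e \<in> M_T. rk e \<le> i} \<subseteq> G i"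
  proof
    fix e assume "e \<in> {e \<in> M_T. rk e \<le> i}"
    then show "e \<in> G i" using reduced_in_Gp[of e i] assms M_T_subset_reduced by auto
  qed
  moreover have "{e \<in> M_T. rk e \<le> i} \<subseteq> M_T" by blast
  ultimately show ?thesis using is_matching_mono[OF is_matching_subset[OF M_T_matching]] by simp
qed

lemma new_count_le_old_count:
  assumes "1 \<le> i" "i \<le> r + 1"
  shows "new_count i \<le> old_count i"
proof -
  have "count_upto i M_T \<le> count_upto i M"
    using M_upto_max_matching[OF assms] M_T_upto_matching[OF assms]
    unfolding max_matching_def count_upto_def M_upto_def by blast
  then show ?thesis using count_upto_split by simp
qed

text \<open>Writing the rank of an edge as r + 1 minus the number of thresholds i \<in> {1..r} it does
  not exceed turns the weight of T into a sum over thresholds.\<close>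

lemma path_weight_counts:
  "path_weight (xrank rank r) M T = (\<Sum>i\<in>{1..r}. int (old_count i) - int (new_count i))"
proof -
  have rk_eq: "int (rk e) = int r + 1 - (\<Sum>i\<in>{1..r}. if rk e \<le> i then 1 else 0)" if "e \<in> X" for e
  proof -
    have "{i \<in> {1..r}. rk e \<le> i} = {rk e..r}" using X_rk_bounds[OF that] by auto
    then have "(\<Sum>i\<in>{1..r}. if rk e \<le> i then 1 else 0 :: int) = (\<Sum>i\<in>{rk e..r}. 1)"
      using sum.inter_filter[of "{1..r}" "\<lambda>_. 1::int" "\<lambda>i. rk e \<le> i"] by simp
    then show ?thesis using X_rk_bounds[OF that] by (simp add: of_nat_diff)
  qed
  have card_eq: "int (card {j. j < steps \<and> Q j}) = (\<Sum>j<steps. if Q j then 1 else 0)" for Q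
    using sum.inter_filter[of "{..<steps}" "\<lambda>_. 1::int" Q] by (simp add: lessThan_def)
  have "path_weight (xrank rank r) M T = (\<Sum>j<steps. int (rk (new_edge j)) - int (rk (old_edge j)))"
    unfolding path_weight_def steps_def[symmetric]
    by (rule sum.cong) (simp_all add: sw_weight_def Let_def mover_def[symmetric] rk_def
        new_edge_def old_edge_def)
  also have "\<dots> = (\<Sum>j<steps. \<Sum>i\<in>{1..r}.
      (if rk (old_edge j) \<le> i then 1 else 0) - (if rk (new_edge j) \<le> i then 1 else 0))"
  proof (rule sum.cong)
    fix j assume "j \<in> {..<steps}"
    then have "old_edge j \<in> X" "new_edge j \<in> X"
      using edges_along_T M_subset_X reduced_subset_X by blast+
    then show "int (rk (new_edge j)) - int (rk (old_edge j)) = (\<Sum>i\<in>{1..r}.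
        (if rk (old_edge j) \<le> i then 1 else 0) - (if rk (new_edge j) \<le> i then 1 else 0))"
      using rk_eq by (simp add: sum_subtractf)
  qed simp
  also have "\<dots> = (\<Sum>i\<in>{1..r}. \<Sum>j<steps.
      (if rk (old_edge j) \<le> i then 1 else 0) - (if rk (new_edge j) \<le> i then 1 else 0))"
    by (rule sum.swap)
  also have "\<dots> = (\<Sum>i\<in>{1..r}. int (old_count i) - int (new_count i))"
    unfolding old_count_def new_count_def card_eq by (simp add: sum_subtractf)
  finally show ?thesis .
qed

lemma path_weight_zero_iff_counts:
  "path_weight (xrank rank r) M T = 0 \<longleftrightarrow> (\<forall>i\<in>{1..r + 1}. new_count i = old_count i)"
proof -
  have nonneg: "0 \<le> int (old_count i) - int (new_count i)" if "i \<in> {1..r}" for i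
    using new_count_le_old_count that by simp
  have "(\<Sum>i\<in>{1..r}. int (old_count i) - int (new_count i)) = 0
      \<longleftrightarrow> (\<forall>i\<in>{1..r}. int (old_count i) - int (new_count i) = 0)"
    using nonneg by (intro sum_nonneg_eq_0_iff) auto
  then have "path_weight (xrank rank r) M T = 0 \<longleftrightarrow> (\<forall>i\<in>{1..r}. new_count i = old_count i)"
    by (auto simp: path_weight_counts)
  then show ?thesis using counts_top by (auto simp: le_Suc_eq)
qed

lemma hd_T: "hd T = T ! 0"
  using T by (simp add: dpath_def hd_conv_nth)

lemma head_even_if_counts_eq:
  assumes eq: "new_count i = old_count i" and i: "1 \<le> i" "i \<le> r + 1"
  shows "Po (hd T) \<in> Ec i"
proof -
  let ?K = "{e \<in> M_T. rk e \<le> i}"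
  have "card ?K = card (M_upto i)"
    using count_upto_split[of i] eq count_upto_M by (simp add: count_upto_def)
  then have "max_matching (G i) ?K"
    using M_upto_max_matching[OF i] M_T_upto_matching[OF i] unfolding max_matching_def by simp
  moreover have "\<not> covered ?K (Po (T ! 0))"
    using M_T_head_free covered_mono[of ?K M_T] by blast
  moreover have "Po (T ! 0) \<in> V" using T Po_in_V by (auto simp: dpath_def)
  ultimately show ?thesis
    using gallai_edmonds.free_even[OF gallai_edmonds_Gp[OF i(1)]] hd_T by (simp add: Ecl_def)
qed

lemma M_T_covers_odd_unr:
  assumes i: "1 \<le> i" "i \<le> r + 1" and head: "Po (T ! 0) \<in> Ec i" and v: "v \<in> OU i"
  shows "covered M_T v"
proof -
  have "covered (M_upto i) v"
    using gallai_edmonds.odd_unr_covered[OF gallai_edmonds_Gp[OF i(1) M_upto_max_matching[OF i]]]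
      v OU_eq by blast
  then obtain f where f: "f \<in> M" "has_end f v"
    unfolding covered_iff_has_end M_upto_def by blast
  show ?thesis
  proof (cases "f \<in> old_edge ` {..<steps}")
    case False
    then show ?thesis using f covered_iff_has_end unfolding M_T_def by blast
  next
    case True
    then obtain j where j: "j < steps" "f = old_edge j" by blast
    then have "v = Ap (mover j) \<or> v = Po (T ! j)" using f(2) by (simp add: old_edge_def has_end_def)
    moreover have "has_end (new_edge j) (Ap (mover j))" "new_edge j \<in> M_T"
      using j(1) by (auto simp: new_edge_def has_end_def M_T_def)
    moreover have "v \<noteq> Po (T ! 0)"
      using v head gallai_edmonds.even_not_odd[OF gallai_edmonds_Gp[OF i(1) M_upto_max_matching[OF i]]]
      unfolding OU_def Ecl_def Ocl_def Ucl_def unr_vs_def by auto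
    moreover have "has_end (new_edge j') (Po (T ! j))" "new_edge j' \<in> M_T" if "j = Suc j'" for j'
      using j(1) that by (auto simp: new_edge_def has_end_def M_T_def)
    ultimately show ?thesis using covered_iff_has_end by (cases j) blast+
  qed
qed

lemma counts_eq_if_head_even:
  assumes head: "Po (hd T) \<in> Ec i" and i: "1 \<le> i" "i \<le> r + 1"
  shows "new_count i = old_count i"
proof -
  have "count_upto i M \<le> count_upto i M_T"
  proof (rule count_upto_ge_if_covers[OF i(1) M_upto_max_matching[OF i]])
    show "is_matching X M_T"
      using is_matching_mono[OF M_T_matching] M_T_subset_reduced reduced_subset_X by blast
    show "e \<in> G i \<and> \<not> deleted_at e i" if "e \<in> M_T" "rk e \<le> i" for e
      using that reduced_in_Gp i M_T_subset_reduced by blast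
    show "\<not> incident e (OU i)" if "e \<in> M_T" "i < rk e" for e
      using that reduced_not_incident i M_T_subset_reduced by blast
    show "covered M_T v" if "v \<in> OU i" for v
      using M_T_covers_odd_unr[OF i _ that] head hd_T by simp
  qed
  then show ?thesis using count_upto_split new_count_le_old_count[OF i] by simp
qed

theorem path_weight_zero_iff:
  "path_weight (xrank rank r) M T = 0 \<longleftrightarrow> (\<forall>i\<in>{1..r + 1}. Po (hd T) \<in> Ec i)"
  using path_weight_zero_iff_counts head_even_if_counts_eq counts_eq_if_head_even by auto

end

end

theorem lemma4:
  fixes A :: "'a set" and P :: "'p set" and E :: "('a \<times> 'p) set"
    and rank :: "'a \<Rightarrow> 'p \<Rightarrow> nat" and r :: nat
    and M :: "('a \<times> ('p + 'a)) set"
  assumes inst: "rm_instance A P E rank r"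
    and rm: "rank_maximal A E rank r M"
  shows "(\<forall>p \<in> posts A P. (\<nexists>a. (a, p) \<in> M) \<longrightarrow>
            (\<forall>i \<in> {1..r + 1}. Po p \<in> Ecl A P E rank r i) \<and> is_sink A P E rank r M p)
       \<and> (\<forall>p \<in> posts A P.
            (in_sink_comp A P E rank r M p \<longleftrightarrow> Po p \<in> Ecl A P E rank r (r + 1)) \<and>
            (in_nonsink_comp A P E rank r M p \<longleftrightarrow> Po p \<in> Ucl A P E rank r (r + 1)))
       \<and> (\<forall>T. dpath (posts A P) (reduced A P E rank r) M T \<and> is_sink A P E rank r M (last T) \<longrightarrow>
            (path_weight (xrank rank r) M T = 0 \<longleftrightarrow>
               (\<forall>i \<in> {1..r + 1}. Po (hd T) \<in> Ecl A P E rank r i)))"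
proof -
  interpret rank_maximal_instance A P E rank r M
    using inst rm by (rule rank_maximal_instance.intro)
  show ?thesis
    using unmatched_post_even unmatched_post_sink in_sink_comp_iff in_nonsink_comp_iff
      path_weight_zero_iff by blast
qed

end
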